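(* Let $T$ be a tree with a proper 2-coloring $\chi:V(T)\to\{\mathcal{R},\mathcal{B}\}$. Then $T$ is unmixed if and only if every connected component $T'$ of $T_\mathcal{B}$ and of $T_\mathcal{R}$ satisfies: (1) $\mathrm{height}(T')\le 3$; (2) for all $v\in V_2(T')$, $|N_{T'}(v)\cap V_1(T')|=1$; and (3) for all $v\in V_1(T')$, $|N_{T'}(v)\cap V_2(T')|\le 1$.
   Context: $N_G(v)=\{u: uv\in E(G)\}$, $N(D)=\bigcup_{v\in D}N(v)$, $N[U]=N(U)\cup U$. A TD-set of $G$ is $D\subseteq V(G)$ with $N(D)=V(G)$; minimal if no proper subset is a TD-set; $G$ is unmixed if all its minimal TD-sets have the same size. A leaf is a vertex of degree 1, a support vertex is one adjacent to a leaf. The height of a vertex of a graph is its minimum distance to a leaf of that graph (isolated vertices have height 0); $V_k(G)$ is the set of vertices of height $k$, and $\mathrm{height}(G)=\max\{k: V_k(G)\ne\emptyset\}$. The blue interior graph $T_\mathcal{B}$ is the subgraph of $T$ induced on $V(T)\setminus N[V_1(T)\cap\chi^{-1}(\mathcal{B})]$; the red interior graph $T_\mathcal{R}$ is the subgraph induced on $V(T)\setminus N[V_1(T)\cap\chi^{-1}(\mathcal{R})]$. *)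

theory Defs
  imports Main
begin

datatype color = Red | Blue

definition simple_graph :: "'a set \<Rightarrow> ('a \<Rightarrow> 'a \<Rightarrow> bool) \<Rightarrow> bool" where
  "simple_graph V E \<longleftrightarrow> (\<forall>u v. E u v \<longrightarrow> u \<in> V \<and> v \<in> V \<and> u \<noteq> v \<and> E v u)"

definition induced :: "('a \<Rightarrow> 'a \<Rightarrow> bool) \<Rightarrow> 'a set \<Rightarrow> 'a \<Rightarrow> 'a \<Rightarrow> bool" where
  "induced E S = (\<lambda>u v. E u v \<and> u \<in> S \<and> v \<in> S)"

definition graph_connected :: "'a set \<Rightarrow> ('a \<Rightarrow> 'a \<Rightarrow> bool) \<Rightarrow> bool" where
  "graph_connected V E \<longleftrightarrow> (\<forall>u\<in>V. \<forall>v\<in>V. E\<^sup>*\<^sup>* u v)"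

definition is_cycle :: "'a set \<Rightarrow> ('a \<Rightarrow> 'a \<Rightarrow> bool) \<Rightarrow> 'a list \<Rightarrow> bool" where
  "is_cycle V E xs \<longleftrightarrow> length xs \<ge> 3 \<and> distinct xs \<and> set xs \<subseteq> V
     \<and> (\<forall>i. Suc i < length xs \<longrightarrow> E (xs ! i) (xs ! Suc i)) \<and> E (last xs) (hd xs)"

definition tree :: "'a set \<Rightarrow> ('a \<Rightarrow> 'a \<Rightarrow> bool) \<Rightarrow> bool" where
  "tree V E \<longleftrightarrow> finite V \<and> V \<noteq> {} \<and> simple_graph V E \<and> graph_connected V E
     \<and> (\<nexists>xs. is_cycle V E xs)"

definition proper_2_coloring :: "'a set \<Rightarrow> ('a \<Rightarrow> 'a \<Rightarrow> bool) \<Rightarrow> ('a \<Rightarrow> color) \<Rightarrow> bool" where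
  "proper_2_coloring V E \<chi> \<longleftrightarrow> (\<forall>u v. E u v \<longrightarrow> \<chi> u \<noteq> \<chi> v)"

definition nbhd :: "('a \<Rightarrow> 'a \<Rightarrow> bool) \<Rightarrow> 'a \<Rightarrow> 'a set" where
  "nbhd E v = {u. E u v}"

definition nbhd_set :: "('a \<Rightarrow> 'a \<Rightarrow> bool) \<Rightarrow> 'a set \<Rightarrow> 'a set" where
  "nbhd_set E D = (\<Union>v\<in>D. nbhd E v)"

definition closed_nbhd_set :: "('a \<Rightarrow> 'a \<Rightarrow> bool) \<Rightarrow> 'a set \<Rightarrow> 'a set" where
  "closed_nbhd_set E U = nbhd_set E U \<union> U"

definition is_TD_set :: "'a set \<Rightarrow> ('a \<Rightarrow> 'a \<Rightarrow> bool) \<Rightarrow> 'a set \<Rightarrow> bool" where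
  "is_TD_set V E D \<longleftrightarrow> D \<subseteq> V \<and> nbhd_set E D = V"

definition minimal_TD_set :: "'a set \<Rightarrow> ('a \<Rightarrow> 'a \<Rightarrow> bool) \<Rightarrow> 'a set \<Rightarrow> bool" where
  "minimal_TD_set V E D \<longleftrightarrow> is_TD_set V E D \<and> (\<forall>D'. D' \<subset> D \<longrightarrow> \<not> is_TD_set V E D')"

definition unmixed :: "'a set \<Rightarrow> ('a \<Rightarrow> 'a \<Rightarrow> bool) \<Rightarrow> bool" where
  "unmixed V E \<longleftrightarrow> (\<forall>D1 D2. minimal_TD_set V E D1 \<longrightarrow> minimal_TD_set V E D2 \<longrightarrow> card D1 = card D2)"

definition leaf :: "'a set \<Rightarrow> ('a \<Rightarrow> 'a \<Rightarrow> bool) \<Rightarrow> 'a \<Rightarrow> bool" where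
  "leaf V E v \<longleftrightarrow> v \<in> V \<and> card (nbhd E v) = 1"

definition vheight :: "'a set \<Rightarrow> ('a \<Rightarrow> 'a \<Rightarrow> bool) \<Rightarrow> 'a \<Rightarrow> nat" where
  "vheight V E v = (if nbhd E v = {} then 0 else (LEAST k. \<exists>u. leaf V E u \<and> (E ^^ k) v u))"

definition Vk :: "'a set \<Rightarrow> ('a \<Rightarrow> 'a \<Rightarrow> bool) \<Rightarrow> nat \<Rightarrow> 'a set" where
  "Vk V E k = {v \<in> V. vheight V E v = k}"

definition gheight :: "'a set \<Rightarrow> ('a \<Rightarrow> 'a \<Rightarrow> bool) \<Rightarrow> nat" where
  "gheight V E = Max {k. Vk V E k \<noteq> {}}"

definition components :: "'a set \<Rightarrow> ('a \<Rightarrow> 'a \<Rightarrow> bool) \<Rightarrow> 'a set set" where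
  "components V E = {{u \<in> V. (induced E V)\<^sup>*\<^sup>* v u} | v. v \<in> V}"

definition interior_set :: "'a set \<Rightarrow> ('a \<Rightarrow> 'a \<Rightarrow> bool) \<Rightarrow> ('a \<Rightarrow> color) \<Rightarrow> color \<Rightarrow> 'a set" where
  "interior_set V E \<chi> c = V - closed_nbhd_set E (Vk V E 1 \<inter> {v. \<chi> v = c})"

end

theory Submission
  imports Defs
begin

text \<open>
  In a properly 2-colored graph without isolated vertices a set is a total dominating set
  iff, for each color \<open>c\<close>, its \<open>c\<close>-colored part dominates all vertices of the other
  color (a \<open>c\<close>-cover). Minimal TD-sets are therefore exactly the unions of a minimal blue
  and a minimal red cover, and \<open>T\<close> is unmixed iff for both colors all minimal covers have
  the same size.

  Every \<open>c\<close>-cover contains the \<open>c\<close>-colored support vertices (their leaves must be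
  dominated), and the other vertices of a minimal cover lie in the interior graph \<open>T\<^sub>c\<close>.
  If every component of \<open>T\<^sub>c\<close> satisfies conditions (1)-(3), each of these vertices has a unique
  neighbor of height 1 in its component, and this matches them bijectively with the vertices
  of height 1; so every minimal cover has the same size. Conversely, a violation of (1), (2)
  or (3) yields a path \<open>b - q1 - y - r\<close> in \<open>T\<^sub>c\<close> with a leaf \<open>e\<close> of \<open>T\<^sub>c\<close> at \<open>r\<close>, and a cover in
  which \<open>b\<close> and \<open>e\<close> are forced; replacing both by \<open>y\<close> produces a strictly smaller minimal
  cover. Trees with at most two vertices satisfy both sides trivially.
\<close>

lemma simple_graph_edgeD:
  assumes "simple_graph V E" "E u v"
  shows "u \<in> V" "v \<in> V" "u \<noteq> v" "E v u"
  using assms by (auto simp: simple_graph_def)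

lemma induced_idem: "induced (induced E S) S = induced E S"
  by (auto simp: induced_def fun_eq_iff)

lemma induced_eq_if_simple_graph: "simple_graph V E \<Longrightarrow> induced E V = E"
  by (auto simp: induced_def fun_eq_iff dest: simple_graph_edgeD)

lemma simple_graph_induced: "simple_graph V E \<Longrightarrow> simple_graph S (induced E S)"
  by (auto simp: simple_graph_def induced_def)

lemma color_neq_neq: "(a::color) \<noteq> b \<Longrightarrow> c \<noteq> b \<Longrightarrow> a = c"
  by (cases a; cases b; cases c) auto

lemma relpowp_color_parity:
  assumes proper: "\<And>a b. G a b \<Longrightarrow> \<chi> a \<noteq> (\<chi> b :: color)"
  shows "(G ^^ k) x u \<Longrightarrow> \<chi> u = \<chi> x \<longleftrightarrow> even k"
proof (induction k arbitrary: u)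
  case 0
  then show ?case by simp
next
  case (Suc k)
  obtain y where y: "(G ^^ k) x y" "G y u" using Suc.prems by (rule relpowp_Suc_E)
  have "\<chi> u \<noteq> \<chi> y" using proper y(2) by metis
  moreover have "\<chi> y = \<chi> x \<longleftrightarrow> even k" using Suc.IH y(1) .
  ultimately show ?case using color_neq_neq[of "\<chi> u" "\<chi> y" "\<chi> x"] by auto
qed

section \<open>Walks and trees\<close>

lemma rtranclp_imp_walk:
  "G\<^sup>*\<^sup>* a b \<Longrightarrow> \<exists>xs. successively G xs \<and> xs \<noteq> [] \<and> hd xs = a \<and> last xs = b"
proof (induction rule: rtranclp_induct)
  case base
  show ?case by (intro exI[of _ "[a]"]) simp
next
  case (step y z)
  then obtain xs where "successively G xs" "xs \<noteq> []" "hd xs = a" "last xs = y" by blast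
  with step.hyps(2) show ?case
    by (intro exI[of _ "xs @ [z]"]) (auto simp: successively_append_iff)
qed

lemma walk_relpowp:
  "successively G xs \<Longrightarrow> xs \<noteq> [] \<Longrightarrow> (G ^^ (length xs - 1)) (hd xs) (last xs)"
proof (induction G xs rule: successively.induct)
  case (3 G x y xs)
  then show ?case using relpowp_Suc_I2[of G x y] by simp
qed auto

lemma walk_remove_cycles:
  assumes "successively G xs" "xs \<noteq> []"
  obtains ys where "successively G ys" "ys \<noteq> []" "hd ys = hd xs" "last ys = last xs"
    "distinct ys" "set ys \<subseteq> set xs"
  using assms
proof (induction "length xs" arbitrary: xs rule: less_induct)
  case less
  show ?case
  proof (cases "distinct xs")
    case True
    then show ?thesis using less by blast
  next
    case False
    then obtain as y bs cs where xs: "xs = as @ [y] @ bs @ [y] @ cs"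
      using not_distinct_decomp by blast
    let ?zs = "as @ [y] @ cs"
    have "successively G (as @ [y])" "successively G (y # cs)"
      using less.prems(2) successively_append_iff[of G "y # bs" "y # cs"]
      unfolding xs by (auto simp: successively_append_iff)
    then have "successively G ?zs" by (auto simp: successively_append_iff)
    moreover have "length ?zs < length xs" "?zs \<noteq> []" "set ?zs \<subseteq> set xs"
      unfolding xs by auto
    moreover have "hd ?zs = hd xs" "last ?zs = last xs"
      unfolding xs by (cases as; simp) (cases cs; simp)
    ultimately show ?thesis
      using less.hyps[of ?zs] less.prems(1) by (metis order_trans)
  qed
qed

lemma walk_subset:
  assumes "\<And>u v. G u v \<Longrightarrow> u \<in> S \<and> v \<in> S" "successively G xs" "2 \<le> length xs"
  shows "set xs \<subseteq> S"
  using assms(2,3)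
proof (induction xs rule: induct_list012)
  case (3 x y xs)
  then show ?case by (cases xs) (auto dest: assms(1))
qed auto

lemma tree_walk_no_common_neighbor:
  assumes T: "tree V E" and walk: "successively E xs" "xs \<noteq> []" "hd xs \<noteq> last xs"
    and x: "x \<notin> set xs" "E x (hd xs)" "E x (last xs)"
  shows False
proof -
  have sg: "simple_graph V E" using T by (simp add: tree_def)
  obtain ys where ys: "successively E ys" "ys \<noteq> []" "hd ys = hd xs" "last ys = last xs"
    "distinct ys" "set ys \<subseteq> set xs"
    using walk_remove_cycles[OF walk(1,2)] by blast
  have "2 \<le> length ys" using ys walk(3) by (cases ys; cases "tl ys") auto
  let ?cycle = "x # ys"
  have walk_cycle: "successively E ?cycle" using ys x(2) by (cases ys) auto
  have "is_cycle V E ?cycle"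
    unfolding is_cycle_def
  proof (intro conjI)
    show "set ?cycle \<subseteq> V"
      using walk_subset[OF _ walk_cycle] \<open>2 \<le> length ys\<close> simple_graph_edgeD[OF sg] by auto
    show "\<forall>i. Suc i < length ?cycle \<longrightarrow> E (?cycle ! i) (?cycle ! Suc i)"
      using walk_cycle by (simp add: successively_conv_nth)
    show "E (last ?cycle) (hd ?cycle)" using ys x(3) simple_graph_edgeD[OF sg] by auto
  qed (use \<open>2 \<le> length ys\<close> ys x in auto)
  then show False using T by (auto simp: tree_def)
qed

lemma tree_connected_set_unique_neighbor:
  assumes T: "tree V E" and conn: "\<forall>a\<in>S. (induced E S)\<^sup>*\<^sup>* s a"
    and ab: "a \<in> S" "b \<in> S" and x: "x \<notin> S" "E x a" "E x b"
  shows "a = b"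
proof (rule ccontr)
  assume "a \<noteq> b"
  have "symp (induced E S)"
    using T by (auto simp: tree_def simple_graph_def induced_def intro!: sympI)
  then have "(induced E S)\<^sup>*\<^sup>* a b"
    using conn ab by (meson rtranclp_trans sympD symp_rtranclp)
  then obtain xs where xs: "successively (induced E S) xs" "xs \<noteq> []" "hd xs = a" "last xs = b"
    using rtranclp_imp_walk by metis
  have "2 \<le> length xs" using xs \<open>a \<noteq> b\<close> by (cases xs; cases "tl xs") auto
  then have "set xs \<subseteq> S" using walk_subset[OF _ xs(1)] by (auto simp: induced_def)
  moreover have "successively E xs" using xs(1) by (rule successively_mono) (simp add: induced_def)
  ultimately show False
    using tree_walk_no_common_neighbor[OF T _ xs(2)] xs x \<open>a \<noteq> b\<close> by auto
qed

lemma tree_maximal_path_ends_in_leaf: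
  assumes T: "tree V E"
    and xs: "successively (induced E C) xs" "distinct xs" "2 \<le> length xs"
    and maximal: "\<And>m. induced E C (last xs) m \<Longrightarrow> m \<in> set xs"
  shows "leaf C (induced E C) (last xs)"
proof -
  let ?G = "induced E C"
  have sg: "simple_graph V E" using T by (simp add: tree_def)
  have G_sym: "?G v u" if "?G u v" for u v
    using simple_graph_edgeD(4)[OF simple_graph_induced[OF sg] that] .
  obtain zs p u where xs_eq: "xs = zs @ [p, u]"
  proof -
    obtain ws u where ws: "xs = ws @ [u]" using xs(3) by (cases xs rule: rev_cases) auto
    moreover obtain zs p where "ws = zs @ [p]" using xs(3) ws by (cases ws rule: rev_cases) auto
    ultimately show thesis using that by simp
  qed
  have pu: "?G p u" using xs(1) unfolding xs_eq by (simp add: successively_append_iff)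
  have only_p: "m = p" if mu: "?G m u" for m
  proof (rule ccontr)
    assume "m \<noteq> p"
    have "m \<in> set xs" using maximal[of m] G_sym[OF mu] xs_eq by simp
    moreover have "m \<noteq> u" using mu simple_graph_edgeD(3)[OF simple_graph_induced[OF sg]] by blast
    ultimately have "m \<in> set zs" using \<open>m \<noteq> p\<close> xs_eq by auto
    then obtain pre mid where zs: "zs = pre @ m # mid" by (meson split_list)
    have "successively ?G ((m # mid) @ [p])"
      using xs(1) successively_append_iff[of ?G "m # mid @ [p]" "[u]"]
      unfolding xs_eq zs by (simp add: successively_append_iff)
    then have "successively E ((m # mid) @ [p])"
      by (rule successively_mono) (simp add: induced_def)
    moreover have "u \<notin> set ((m # mid) @ [p])" using xs(2) unfolding xs_eq zs by auto
    moreover have "E u m" "E u p" using G_sym[OF mu] G_sym[OF pu] by (simp_all add: induced_def)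
    ultimately show False
      using tree_walk_no_common_neighbor[OF T, of "(m # mid) @ [p]" u] \<open>m \<noteq> p\<close> by simp
  qed
  have "nbhd ?G u = {p}" using only_p pu unfolding nbhd_def by blast
  moreover have "u \<in> C" using pu by (simp add: induced_def)
  ultimately show ?thesis using xs_eq by (simp add: leaf_def)
qed

lemma tree_induced_leaf_reachable:
  assumes T: "tree V E" and CV: "C \<subseteq> V" and x: "x \<in> C" "nbhd (induced E C) x \<noteq> {}"
  shows "\<exists>k u. leaf C (induced E C) u \<and> ((induced E C) ^^ k) x u"
proof -
  let ?G = "induced E C"
  have sg: "simple_graph V E" using T by (simp add: tree_def)
  have fC: "finite C" using T finite_subset[OF CV] by (simp add: tree_def)
  define path where "path xs \<longleftrightarrow> xs \<noteq> [] \<and> hd xs = x \<and> distinct xs \<and> set xs \<subseteq> C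
    \<and> successively ?G xs" for xs
  have "length xs < Suc (card C)" if "path xs" for xs
    using that distinct_card[of xs] card_mono[OF fC, of "set xs"] unfolding path_def by simp
  moreover have "path [x]" using x(1) unfolding path_def by simp
  ultimately obtain xs where xs: "path xs" and longest: "\<And>ys. path ys \<Longrightarrow> length ys \<le> length xs"
    using ex_has_greatest_nat[of path "[x]" length] by blast
  have maximal: "m \<in> set xs" if "?G (last xs) m" for m
  proof (rule ccontr)
    assume "m \<notin> set xs"
    then have "path (xs @ [m])"
      using xs that unfolding path_def by (auto simp: successively_append_iff induced_def)
    then show False using longest[of "xs @ [m]"] by simp
  qed
  have "2 \<le> length xs"
  proof (rule ccontr)
    assume "\<not> 2 \<le> length xs"
    then have "xs = [x]" using xs unfolding path_def by (cases xs; cases "tl xs") auto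
    moreover obtain n where n: "?G n x" using x(2) by (auto simp: nbhd_def)
    ultimately have "n \<in> set [x]"
      using maximal[of n] simple_graph_edgeD(4)[OF simple_graph_induced[OF sg] n] by simp
    then show False using simple_graph_edgeD(3)[OF simple_graph_induced[OF sg] n] by simp
  qed
  then have "leaf C ?G (last xs)"
    using tree_maximal_path_ends_in_leaf[OF T _ _ _ maximal] xs unfolding path_def by blast
  moreover have "(?G ^^ (length xs - 1)) x (last xs)"
    using walk_relpowp[of ?G xs] xs unfolding path_def by auto
  ultimately show ?thesis by blast
qed

section \<open>Heights in induced subgraphs of a tree\<close>

locale induced_subforest =
  fixes V :: "'a set" and E :: "'a \<Rightarrow> 'a \<Rightarrow> bool" and C :: "'a set"
  assumes tree: "tree V E" and subset: "C \<subseteq> V"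
begin

abbreviation "G \<equiv> induced E C"
abbreviation "h \<equiv> vheight C G"

lemma simple_graph_G: "simple_graph C G"
  using tree simple_graph_induced by (auto simp: tree_def)

lemma G_sym: "G u v \<Longrightarrow> G v u"
  by (rule simple_graph_edgeD(4)[OF simple_graph_G])

lemma G_irrefl: "G u v \<Longrightarrow> u \<noteq> v"
  by (rule simple_graph_edgeD(3)[OF simple_graph_G])

lemma G_in: "G u v \<Longrightarrow> u \<in> C" "G u v \<Longrightarrow> v \<in> C"
  by (simp_all add: induced_def)

lemma finite_C: "finite C"
  using tree finite_subset[OF subset] by (simp add: tree_def)

lemma in_nbhd_iff: "u \<in> nbhd G v \<longleftrightarrow> G v u"
  unfolding nbhd_def using G_sym by blast

lemma finite_nbhd: "finite (nbhd G x)"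
proof -
  have "nbhd G x \<subseteq> C" using G_in(1) by (auto simp: nbhd_def)
  then show ?thesis using finite_C by (rule finite_subset)
qed

lemma vheight_isolated: "nbhd G x = {} \<Longrightarrow> h x = 0"
  by (simp add: vheight_def)

lemma leaf_at_vheight:
  assumes "x \<in> C" "nbhd G x \<noteq> {}"
  shows "\<exists>u. leaf C G u \<and> (G ^^ h x) x u"
proof -
  have "\<exists>k u. leaf C G u \<and> (G ^^ k) x u"
    using tree_induced_leaf_reachable[OF tree subset assms] .
  then have "\<exists>u. leaf C G u \<and> (G ^^ (LEAST k. \<exists>u. leaf C G u \<and> (G ^^ k) x u)) x u"
    by (rule LeastI_ex)
  then show ?thesis using assms by (simp add: vheight_def)
qed

lemma vheight_le:
  assumes "nbhd G x \<noteq> {}" "leaf C G u" "(G ^^ k) x u"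
  shows "h x \<le> k"
  using assms Least_le[of "\<lambda>k. \<exists>u. leaf C G u \<and> (G ^^ k) x u" k] by (auto simp: vheight_def)

lemma vheight_leaf: "leaf C G x \<Longrightarrow> h x = 0"
proof -
  assume "leaf C G x"
  moreover have "nbhd G x \<noteq> {}" using \<open>leaf C G x\<close> by (auto simp: leaf_def)
  ultimately show "h x = 0" using vheight_le[of x x 0] by simp
qed

lemma leaf_if_vheight_0: "x \<in> C \<Longrightarrow> nbhd G x \<noteq> {} \<Longrightarrow> h x = 0 \<Longrightarrow> leaf C G x"
  using leaf_at_vheight by fastforce

lemma vheight_edge_le: "G x y \<Longrightarrow> h x \<le> Suc (h y)"
proof -
  assume xy: "G x y"
  have y: "y \<in> C" "nbhd G y \<noteq> {}" using G_in(2)[OF xy] in_nbhd_iff G_sym[OF xy] by blast+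
  obtain u where u: "leaf C G u" "(G ^^ h y) y u" using leaf_at_vheight[OF y] by blast
  have "(G ^^ Suc (h y)) x u" using xy u(2) by (rule relpowp_Suc_I2)
  moreover have "nbhd G x \<noteq> {}" using xy in_nbhd_iff by blast
  ultimately show ?thesis using vheight_le u(1) by blast
qed

lemma vheight_Suc_neighbor:
  assumes "x \<in> C" "h x = Suc k"
  obtains y where "G x y" "h y = k"
proof -
  have "nbhd G x \<noteq> {}" using assms vheight_isolated by fastforce
  then obtain u where "leaf C G u" "(G ^^ h x) x u" using leaf_at_vheight[OF assms(1)] by blast
  then have u: "leaf C G u" "(G ^^ Suc k) x u" unfolding assms(2) .
  then obtain y where y: "G x y" "(G ^^ k) y u" using relpowp_Suc_D2 by metis
  have "h y \<le> k" using vheight_le[OF _ u(1) y(2)] G_sym[OF y(1)] in_nbhd_iff by blast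
  moreover have "Suc k \<le> Suc (h y)" using vheight_edge_le[OF y(1)] assms(2) by simp
  ultimately show thesis using that y(1) by simp
qed

lemma vheight_eq_1_if_leaf_neighbor:
  assumes "x \<in> C" "G x l" "leaf C G l" "\<not> leaf C G x"
  shows "h x = 1"
proof -
  have "nbhd G x \<noteq> {}" using assms(2) in_nbhd_iff by blast
  moreover have "(G ^^ 1) x l" using assms(2) by (simp only: relpowp_1)
  ultimately have "h x \<le> 1" using vheight_le assms(3) by blast
  moreover have "h x \<noteq> 0" using leaf_if_vheight_0 assms \<open>nbhd G x \<noteq> {}\<close> by blast
  ultimately show ?thesis by simp
qed

lemma leaf_neighbor_if_vheight_1:
  assumes "x \<in> C" "h x = 1"
  obtains l where "G x l" "leaf C G l"
proof -
  have "h x = Suc 0" using assms(2) by simp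
  then obtain y where y: "G x y" "h y = 0" by (rule vheight_Suc_neighbor[OF assms(1)])
  moreover have "nbhd G y \<noteq> {}" using G_sym[OF y(1)] in_nbhd_iff by blast
  ultimately have "leaf C G y" using leaf_if_vheight_0 G_in(2) by blast
  then show thesis using that y(1) by blast
qed

lemma leaf_nbhd: "leaf C G l \<Longrightarrow> G x l \<Longrightarrow> nbhd G l = {x}"
  by (metis card_1_singletonE in_nbhd_iff leaf_def G_sym singletonD)

lemma other_neighbor_if_vheight_pos:
  assumes "x \<in> C" "h x \<noteq> 0" "G x z"
  obtains u where "G x u" "u \<noteq> z"
proof -
  have "\<not> leaf C G x" using vheight_leaf[of x] assms(2) by auto
  then have "nbhd G x \<noteq> {z}" using assms(1) by (auto simp: leaf_def)
  then show thesis using that assms(3) in_nbhd_iff by blast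
qed

lemma vheight_intermediate:
  assumes "x \<in> C" "m \<le> h x"
  shows "\<exists>y\<in>C. h y = m"
  using assms
proof (induction "h x - m" arbitrary: x)
  case 0
  then show ?case by force
next
  case (Suc d)
  obtain k where k: "h x = Suc k" using Suc.hyps(2) by (cases "h x") auto
  obtain y where y: "G x y" "h y = k" using vheight_Suc_neighbor[OF Suc.prems(1) k] .
  show ?case using Suc.hyps(1)[of y] Suc.hyps(2) Suc.prems(2) y k G_in by force
qed

lemma gheight_le_iff:
  assumes "C \<noteq> {}"
  shows "gheight C G \<le> n \<longleftrightarrow> (\<forall>x\<in>C. h x \<le> n)"
proof -
  have "{k. Vk C G k \<noteq> {}} = h ` C" by (auto simp: Vk_def)
  then show ?thesis using finite_C assms by (simp add: gheight_def Max_le_iff)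
qed

end

section \<open>Covers of a color class\<close>

definition color_cover :: "'a set \<Rightarrow> ('a \<Rightarrow> 'a \<Rightarrow> bool) \<Rightarrow> ('a \<Rightarrow> color) \<Rightarrow> color \<Rightarrow> 'a set \<Rightarrow> bool"
  where "color_cover V E \<chi> c D \<longleftrightarrow>
    D \<subseteq> V \<and> (\<forall>d\<in>D. \<chi> d = c) \<and> (\<forall>r\<in>V. \<chi> r \<noteq> c \<longrightarrow> (\<exists>d\<in>D. E d r))"

definition minimal_color_cover ::
    "'a set \<Rightarrow> ('a \<Rightarrow> 'a \<Rightarrow> bool) \<Rightarrow> ('a \<Rightarrow> color) \<Rightarrow> color \<Rightarrow> 'a set \<Rightarrow> bool"
  where "minimal_color_cover V E \<chi> c D \<longleftrightarrow>
    color_cover V E \<chi> c D \<and> (\<forall>D'. D' \<subset> D \<longrightarrow> \<not> color_cover V E \<chi> c D')"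

definition color_unmixed :: "'a set \<Rightarrow> ('a \<Rightarrow> 'a \<Rightarrow> bool) \<Rightarrow> ('a \<Rightarrow> color) \<Rightarrow> color \<Rightarrow> bool"
  where "color_unmixed V E \<chi> c \<longleftrightarrow> (\<forall>D1 D2. minimal_color_cover V E \<chi> c D1 \<longrightarrow>
    minimal_color_cover V E \<chi> c D2 \<longrightarrow> card D1 = card D2)"

definition has_private_neighbor ::
    "'a set \<Rightarrow> ('a \<Rightarrow> 'a \<Rightarrow> bool) \<Rightarrow> ('a \<Rightarrow> color) \<Rightarrow> color \<Rightarrow> 'a set \<Rightarrow> 'a \<Rightarrow> bool"
  where "has_private_neighbor V E \<chi> c X y \<longleftrightarrow>
    (\<exists>r\<in>V. \<chi> r \<noteq> c \<and> E y r \<and> (\<forall>x\<in>X. E x r \<longrightarrow> x = y))"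

lemma minimal_color_cover_exists:
  assumes "finite V" and X: "color_cover V E \<chi> c X"
  shows "\<exists>D\<subseteq>X. minimal_color_cover V E \<chi> c D"
proof -
  obtain D where D: "D \<subseteq> X" "color_cover V E \<chi> c D"
    and least: "\<And>D'. D' \<subseteq> X \<and> color_cover V E \<chi> c D' \<Longrightarrow> card D \<le> card D'"
    using ex_has_least_nat[of "\<lambda>D. D \<subseteq> X \<and> color_cover V E \<chi> c D" X card] X by blast
  have "finite D" using D(2) finite_subset[OF _ \<open>finite V\<close>] by (simp add: color_cover_def)
  then have "\<not> color_cover V E \<chi> c D'" if "D' \<subset> D" for D'
    using least[of D'] that D(1) psubset_card_mono[of D D'] by auto
  then show ?thesis using D by (auto simp: minimal_color_cover_def)
qed

lemma minimal_color_cover_private: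
  assumes m: "minimal_color_cover V E \<chi> c D" and d: "d \<in> D"
  shows "has_private_neighbor V E \<chi> c D d"
proof -
  have cov: "color_cover V E \<chi> c D" using m by (simp add: minimal_color_cover_def)
  have "\<not> color_cover V E \<chi> c (D - {d})" using m d by (auto simp: minimal_color_cover_def)
  then obtain r where r: "r \<in> V" "\<chi> r \<noteq> c" "\<forall>x\<in>D - {d}. \<not> E x r"
    using cov by (auto simp: color_cover_def)
  then obtain x where "x \<in> D" "E x r" using cov by (auto simp: color_cover_def)
  then show ?thesis using r unfolding has_private_neighbor_def by blast
qed

lemma color_cover_contains_private:
  assumes "color_cover V E \<chi> c D" "D \<subseteq> X" "has_private_neighbor V E \<chi> c X y"
  shows "y \<in> D"
  using assms unfolding color_cover_def has_private_neighbor_def by blast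

lemma color_cover_exchange:
  assumes D: "color_cover V E \<chi> c D" "D \<subseteq> X" and A: "A \<subseteq> V" "\<forall>a\<in>A. \<chi> a = c"
    and replace: "\<forall>r\<in>V. \<chi> r \<noteq> c \<longrightarrow> (\<forall>x\<in>R. E x r \<longrightarrow>
       (\<exists>a\<in>A. E a r) \<or> (\<exists>y\<in>X - R. has_private_neighbor V E \<chi> c X y \<and> E y r))"
  shows "color_cover V E \<chi> c ((D - R) \<union> A)"
  unfolding color_cover_def
proof (intro conjI ballI impI)
  show "(D - R) \<union> A \<subseteq> V" using D(1) A(1) by (auto simp: color_cover_def)
next
  fix x assume "x \<in> (D - R) \<union> A"
  then show "\<chi> x = c" using D(1) A(2) by (auto simp: color_cover_def)
next
  fix r assume r: "r \<in> V" "\<chi> r \<noteq> c"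
  then obtain d where d: "d \<in> D" "E d r" using D(1) by (auto simp: color_cover_def)
  show "\<exists>d\<in>(D - R) \<union> A. E d r"
  proof (cases "d \<in> R")
    case True
    then consider a where "a \<in> A" "E a r"
      | y where "y \<in> X - R" "has_private_neighbor V E \<chi> c X y" "E y r"
      using replace[rule_format, OF r _ d(2)] by blast
    then show ?thesis
    proof cases
      case 2
      then show ?thesis using color_cover_contains_private[OF D] by blast
    qed blast
  qed (use d in blast)
qed

text \<open>A minimal cover inside \<open>X\<close> contains all of \<open>R\<close>; exchanging \<open>R\<close> for the
  smaller set \<open>A\<close> gives another cover, and a minimal cover inside that one is smaller.\<close>

lemma not_color_unmixed_by_exchange:
  assumes "finite V" and X: "color_cover V E \<chi> c X" and "R \<subseteq> X"
    and R_private: "\<forall>x\<in>R. has_private_neighbor V E \<chi> c X x"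
    and A: "finite A" "A \<subseteq> V" "\<forall>a\<in>A. \<chi> a = c" and "card A < card R"
    and replace: "\<forall>r\<in>V. \<chi> r \<noteq> c \<longrightarrow> (\<forall>x\<in>R. E x r \<longrightarrow>
       (\<exists>a\<in>A. E a r) \<or> (\<exists>y\<in>X - R. has_private_neighbor V E \<chi> c X y \<and> E y r))"
  shows "\<not> color_unmixed V E \<chi> c"
proof
  assume unmixed: "color_unmixed V E \<chi> c"
  obtain D where "D \<subseteq> X" and D: "minimal_color_cover V E \<chi> c D"
    using minimal_color_cover_exists[OF \<open>finite V\<close> X] by blast
  have D_cover: "color_cover V E \<chi> c D" using D by (simp add: minimal_color_cover_def)
  have "finite D" using D_cover finite_subset[OF _ \<open>finite V\<close>] by (simp add: color_cover_def)
  have "R \<subseteq> D" using color_cover_contains_private[OF D_cover \<open>D \<subseteq> X\<close>] R_private by blast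
  let ?D' = "(D - R) \<union> A"
  have "color_cover V E \<chi> c ?D'"
    using color_cover_exchange[OF D_cover \<open>D \<subseteq> X\<close> A(2,3) replace] .
  then have "\<exists>D2\<subseteq>?D'. minimal_color_cover V E \<chi> c D2"
    by (rule minimal_color_cover_exists[OF \<open>finite V\<close>])
  then obtain D2 where "D2 \<subseteq> ?D'" and D2: "minimal_color_cover V E \<chi> c D2" by blast
  have "card D2 \<le> card ?D'" using \<open>finite D\<close> A(1) \<open>D2 \<subseteq> ?D'\<close> by (simp add: card_mono)
  also have "\<dots> \<le> card (D - R) + card A" by (rule card_Un_le)
  also have "card (D - R) = card D - card R"
    using \<open>R \<subseteq> D\<close> \<open>finite D\<close> by (metis card_Diff_subset finite_subset)
  finally have "card D2 < card D"
    using \<open>card A < card R\<close> card_mono[OF \<open>finite D\<close> \<open>R \<subseteq> D\<close>] by linarith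
  moreover have "card D2 = card D" using unmixed D D2 unfolding color_unmixed_def by blast
  ultimately show False by simp
qed

section \<open>Total domination in bipartite graphs\<close>

locale bipartite_graph =
  fixes V :: "'a set" and E :: "'a \<Rightarrow> 'a \<Rightarrow> bool" and \<chi> :: "'a \<Rightarrow> color"
  assumes simple: "simple_graph V E" and proper: "proper_2_coloring V E \<chi>"
begin

lemma other_color:
  assumes "E u v" "\<chi> v \<noteq> c"
  shows "\<chi> u = c"
proof -
  have "\<chi> u \<noteq> \<chi> v" using proper assms(1) by (simp add: proper_2_coloring_def)
  then show ?thesis using assms(2) by (cases "\<chi> u"; cases "\<chi> v"; cases c) simp_all
qed

lemma is_TD_set_iff_color_covers:
  assumes "D \<subseteq> V"
  shows "is_TD_set V E D \<longleftrightarrow> (\<forall>c. color_cover V E \<chi> c (D \<inter> \<chi> -` {c}))"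
proof -
  have "nbhd_set E D = {x. \<exists>d\<in>D. E d x}"
    unfolding nbhd_set_def nbhd_def using simple_graph_edgeD(4)[OF simple] by blast
  then have "is_TD_set V E D \<longleftrightarrow> (\<forall>x\<in>V. \<exists>d\<in>D. E d x)"
    unfolding is_TD_set_def using assms simple_graph_edgeD(2)[OF simple] by blast
  also have "\<dots> \<longleftrightarrow> (\<forall>c. color_cover V E \<chi> c (D \<inter> \<chi> -` {c}))"
  proof
    assume "\<forall>x\<in>V. \<exists>d\<in>D. E d x"
    then show "\<forall>c. color_cover V E \<chi> c (D \<inter> \<chi> -` {c})"
      using assms other_color unfolding color_cover_def by blast
  next
    assume covers: "\<forall>c. color_cover V E \<chi> c (D \<inter> \<chi> -` {c})"
    show "\<forall>x\<in>V. \<exists>d\<in>D. E d x"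
    proof
      fix x assume "x \<in> V"
      have "\<exists>c::color. \<chi> x \<noteq> c" by (cases "\<chi> x") auto
      then show "\<exists>d\<in>D. E d x" using covers \<open>x \<in> V\<close> unfolding color_cover_def by blast
    qed
  qed
  finally show ?thesis .
qed

lemma minimal_color_covers_if_minimal_TD_set:
  assumes "D \<subseteq> V" and min: "minimal_TD_set V E D"
  shows "minimal_color_cover V E \<chi> c (D \<inter> \<chi> -` {c})"
proof -
  have covers: "color_cover V E \<chi> c' (D \<inter> \<chi> -` {c'})" for c'
    using min is_TD_set_iff_color_covers[OF assms(1)] by (simp add: minimal_TD_set_def)
  have "\<not> color_cover V E \<chi> c S" if S: "S \<subset> D \<inter> \<chi> -` {c}" for S
  proof
    assume S_cover: "color_cover V E \<chi> c S"
    let ?D' = "S \<union> (D - \<chi> -` {c})"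
    have "?D' \<inter> \<chi> -` {c'} = (if c' = c then S else D \<inter> \<chi> -` {c'})" for c'
      using S by auto
    then have "color_cover V E \<chi> c' (?D' \<inter> \<chi> -` {c'})" for c'
      using S_cover covers[of c'] by simp
    moreover have "?D' \<subseteq> V" using S assms(1) by blast
    ultimately have "is_TD_set V E ?D'" using is_TD_set_iff_color_covers by blast
    moreover have "?D' \<subset> D" using S by blast
    ultimately show False using min by (simp add: minimal_TD_set_def)
  qed
  then show ?thesis using covers by (simp add: minimal_color_cover_def)
qed

lemma minimal_TD_set_if_minimal_color_covers:
  assumes "D \<subseteq> V" and min: "\<forall>c. minimal_color_cover V E \<chi> c (D \<inter> \<chi> -` {c})"
  shows "minimal_TD_set V E D"
proof -
  have "is_TD_set V E D"
    using min is_TD_set_iff_color_covers[OF assms(1)] by (simp add: minimal_color_cover_def)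
  moreover have "\<not> is_TD_set V E D'" if "D' \<subset> D" for D'
  proof
    assume TD: "is_TD_set V E D'"
    then have "D' \<subseteq> V" by (simp add: is_TD_set_def)
    then have "color_cover V E \<chi> c (D' \<inter> \<chi> -` {c})" for c
      using is_TD_set_iff_color_covers TD by blast
    then have "\<not> D' \<inter> \<chi> -` {c} \<subset> D \<inter> \<chi> -` {c}" for c
      using min unfolding minimal_color_cover_def by blast
    then have "D' \<inter> \<chi> -` {c} = D \<inter> \<chi> -` {c}" for c using that by blast
    then have "D \<subseteq> D'" by blast
    then show False using that by blast
  qed
  ultimately show ?thesis by (simp add: minimal_TD_set_def)
qed

lemma minimal_TD_set_iff_minimal_color_covers:
  "D \<subseteq> V \<Longrightarrow> minimal_TD_set V E D \<longleftrightarrow> (\<forall>c. minimal_color_cover V E \<chi> c (D \<inter> \<chi> -` {c}))"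
  using minimal_color_covers_if_minimal_TD_set minimal_TD_set_if_minimal_color_covers by blast

lemma card_color_split:
  assumes "finite D"
  shows "card D = card (D \<inter> \<chi> -` {Blue}) + card (D \<inter> \<chi> -` {Red})"
proof -
  have "\<chi> x = Blue \<or> \<chi> x = Red" for x by (cases "\<chi> x") auto
  then have "D = (D \<inter> \<chi> -` {Blue}) \<union> (D \<inter> \<chi> -` {Red})" by auto
  also have "card \<dots> = card (D \<inter> \<chi> -` {Blue}) + card (D \<inter> \<chi> -` {Red})"
    using assms by (intro card_Un_disjoint) auto
  finally show ?thesis .
qed

lemma minimal_color_cover_exists_if_no_isolated:
  assumes "finite V" "\<forall>x\<in>V. \<exists>y. E x y"
  shows "\<exists>D. minimal_color_cover V E \<chi> c D"
proof -
  have "color_cover V E \<chi> c (V \<inter> \<chi> -` {c})"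
    unfolding color_cover_def
  proof (intro conjI ballI impI)
    fix r assume r: "r \<in> V" "\<chi> r \<noteq> c"
    then obtain y where "E r y" using assms(2) by blast
    then have "E y r" "y \<in> V" using simple_graph_edgeD[OF simple] by blast+
    moreover have "\<chi> y = c" using other_color \<open>E y r\<close> r(2) by blast
    ultimately show "\<exists>d\<in>V \<inter> \<chi> -` {c}. E d r" by blast
  qed auto
  then show ?thesis using minimal_color_cover_exists[OF assms(1)] by blast
qed

lemma minimal_TD_set_Un:
  assumes S: "minimal_color_cover V E \<chi> c S" and T: "minimal_color_cover V E \<chi> c' T"
    and "c' \<noteq> c"
  shows "minimal_TD_set V E (S \<union> T)"
proof -
  have part: "S \<subseteq> V" "S \<subseteq> \<chi> -` {c}" "T \<subseteq> V" "T \<subseteq> \<chi> -` {c'}"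
    using S T by (auto simp: minimal_color_cover_def color_cover_def)
  then have parts: "(S \<union> T) \<inter> \<chi> -` {c} = S" "(S \<union> T) \<inter> \<chi> -` {c'} = T"
    using \<open>c' \<noteq> c\<close> by auto
  have colors: "k = c \<or> k = c'" for k using color_neq_neq[of k c c'] \<open>c' \<noteq> c\<close> by blast
  have "minimal_color_cover V E \<chi> k ((S \<union> T) \<inter> \<chi> -` {k})" for k
  proof (cases "k = c")
    case False
    then have "k = c'" using colors by blast
    then show ?thesis using T parts(2) by simp
  qed (use S parts(1) in simp)
  moreover have "S \<union> T \<subseteq> V" using part by blast
  ultimately show ?thesis using minimal_TD_set_iff_minimal_color_covers by blast
qed

lemma color_unmixed_if_unmixed:
  assumes "finite V" "\<forall>x\<in>V. \<exists>y. E x y" and unmixed: "unmixed V E"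
  shows "color_unmixed V E \<chi> c"
  unfolding color_unmixed_def
proof (intro allI impI)
  fix S1 S2
  assume S: "minimal_color_cover V E \<chi> c S1" "minimal_color_cover V E \<chi> c S2"
  have "\<exists>c'::color. c' \<noteq> c" by (cases c) auto
  then obtain c' where "c' \<noteq> c" by blast
  obtain T where T: "minimal_color_cover V E \<chi> c' T"
    using minimal_color_cover_exists_if_no_isolated[OF assms(1,2)] by blast
  have card_Un: "card (Si \<union> T) = card Si + card T" if "minimal_color_cover V E \<chi> c Si" for Si
    using that T \<open>c' \<noteq> c\<close> finite_subset[OF _ assms(1)]
    by (intro card_Un_disjoint) (auto simp: minimal_color_cover_def color_cover_def)
  have "minimal_TD_set V E (S1 \<union> T)" "minimal_TD_set V E (S2 \<union> T)"
    using minimal_TD_set_Un[OF _ T \<open>c' \<noteq> c\<close>] S by blast+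
  then have "card (S1 \<union> T) = card (S2 \<union> T)" using unmixed unfolding unmixed_def by blast
  then show "card S1 = card S2" using card_Un[OF S(1)] card_Un[OF S(2)] by simp
qed

lemma unmixed_if_color_unmixed:
  assumes "finite V" and unmixed_c: "\<forall>c. color_unmixed V E \<chi> c"
  shows "unmixed V E"
  unfolding unmixed_def
proof (intro allI impI)
  fix D1 D2 assume D: "minimal_TD_set V E D1" "minimal_TD_set V E D2"
  have sub: "D1 \<subseteq> V" "D2 \<subseteq> V" using D by (simp_all add: minimal_TD_set_def is_TD_set_def)
  have "card (D1 \<inter> \<chi> -` {c}) = card (D2 \<inter> \<chi> -` {c})" for c
    using unmixed_c D minimal_TD_set_iff_minimal_color_covers[OF sub(1)]
      minimal_TD_set_iff_minimal_color_covers[OF sub(2)]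
    unfolding color_unmixed_def by blast
  then show "card D1 = card D2"
    using card_color_split finite_subset[OF sub(1) assms(1)] finite_subset[OF sub(2) assms(1)]
    by metis
qed

lemma unmixed_iff_color_unmixed:
  "finite V \<Longrightarrow> \<forall>x\<in>V. \<exists>y. E x y \<Longrightarrow> unmixed V E \<longleftrightarrow> (\<forall>c. color_unmixed V E \<chi> c)"
  using color_unmixed_if_unmixed unmixed_if_color_unmixed by blast

end

section \<open>The interior graph of a color class\<close>

definition height_conditions :: "('a \<Rightarrow> 'a \<Rightarrow> bool) \<Rightarrow> 'a set \<Rightarrow> bool" where
  "height_conditions E C \<longleftrightarrow> gheight C (induced E C) \<le> 3
    \<and> (\<forall>v \<in> Vk C (induced E C) 2. card (nbhd (induced E C) v \<inter> Vk C (induced E C) 1) = 1)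
    \<and> (\<forall>v \<in> Vk C (induced E C) 1. card (nbhd (induced E C) v \<inter> Vk C (induced E C) 2) \<le> 1)"

definition component_of :: "('a \<Rightarrow> 'a \<Rightarrow> bool) \<Rightarrow> 'a set \<Rightarrow> 'a \<Rightarrow> 'a set" where
  "component_of E S x = {u \<in> S. (induced E S)\<^sup>*\<^sup>* x u}"

lemma components_eq_component_of: "components S (induced E S) = component_of E S ` S"
  unfolding components_def component_of_def induced_idem by blast

lemma component_of_self: "x \<in> S \<Longrightarrow> x \<in> component_of E S x"
  by (simp add: component_of_def)

lemma component_of_subset: "component_of E S x \<subseteq> S"
  by (auto simp: component_of_def)

lemma components_subset_nonempty:
  assumes "C \<in> components S (induced E S)"
  shows "C \<subseteq> S" "C \<noteq> {}"
proof -
  have "C \<in> component_of E S ` S" using assms by (simp only: components_eq_component_of)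
  then obtain x where x: "x \<in> S" and C: "C = component_of E S x" by auto
  show "C \<subseteq> S" unfolding C by (rule component_of_subset)
  show "C \<noteq> {}" unfolding C using component_of_self[OF x] by blast
qed

lemma component_of_closed:
  assumes "y \<in> component_of E S x" "z \<in> S" "E y z"
  shows "z \<in> component_of E S x"
proof -
  have "(induced E S)\<^sup>*\<^sup>* x y" "induced E S y z"
    using assms by (auto simp: component_of_def induced_def)
  then show ?thesis using assms(2) by (simp add: component_of_def)
qed

lemma component_of_eq:
  assumes "symp E" "u \<in> component_of E S x"
  shows "component_of E S u = component_of E S x"
proof -
  have "symp (induced E S)" using assms(1) by (auto simp: induced_def symp_def)
  then have "symp (induced E S)\<^sup>*\<^sup>*" by (rule symp_rtranclp)
  moreover have xu: "(induced E S)\<^sup>*\<^sup>* x u" using assms(2) by (simp add: component_of_def)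
  ultimately have "(induced E S)\<^sup>*\<^sup>* u x" by (rule sympD)
  then show ?thesis using xu unfolding component_of_def by (meson rtranclp_trans)
qed

locale colored_tree = bipartite_graph V E \<chi> for V E \<chi> +
  fixes c :: color
  assumes tree: "tree V E" and three_vertices: "3 \<le> card V"
begin

definition supports where "supports = Vk V E 1 \<inter> \<chi> -` {c}"

abbreviation inner where "inner \<equiv> interior_set V E \<chi> c"

lemma E_sym: "E u v \<Longrightarrow> E v u"
  by (rule simple_graph_edgeD(4)[OF simple])

lemma E_in: "E u v \<Longrightarrow> u \<in> V" "E u v \<Longrightarrow> v \<in> V"
  using simple_graph_edgeD(1,2)[OF simple] by blast+

lemma finite_V: "finite V"
  using tree by (simp add: tree_def)

lemma has_neighbor:
  assumes "x \<in> V"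
  obtains y where "E x y"
proof -
  have "\<not> V \<subseteq> {x}" using three_vertices card_mono[of "{x}" V] by auto
  then obtain z where "z \<in> V" "z \<noteq> x" by blast
  moreover have "E\<^sup>*\<^sup>* x z"
    using tree assms \<open>z \<in> V\<close> by (simp add: tree_def graph_connected_def)
  ultimately show thesis using that by (metis converse_rtranclpE)
qed

lemma tree_leaf_nbhd: "leaf V E l \<Longrightarrow> E x l \<Longrightarrow> nbhd E l = {x}"
  by (metis card_1_singletonE leaf_def mem_Collect_eq nbhd_def singletonD)

lemma no_adjacent_leaves:
  assumes "E a b" "leaf V E a" "leaf V E b"
  shows False
proof -
  have na: "nbhd E a = {b}" using tree_leaf_nbhd[OF assms(2) E_sym[OF assms(1)]] .
  have nb: "nbhd E b = {a}" using tree_leaf_nbhd[OF assms(3) assms(1)] .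
  have "z \<in> {a, b}" if "z \<in> V" for z
  proof -
    have "E\<^sup>*\<^sup>* a z" using tree E_in(1)[OF assms(1)] that by (simp add: tree_def graph_connected_def)
    then show ?thesis
    proof (induction rule: rtranclp_induct)
      case (step y z)
      then have "z \<in> nbhd E y" using E_sym by (simp add: nbhd_def)
      then show ?case using step.IH na nb by auto
    qed simp
  qed
  then have "card V \<le> card {a, b}" using card_mono[of "{a, b}" V] by blast
  then show False using three_vertices card_insert_le_m1[of 2 "{b}" a] by simp
qed

interpretation whole: induced_subforest V E V
  using tree by unfold_locales simp_all

lemma supports_iff: "f \<in> supports \<longleftrightarrow> f \<in> V \<and> vheight V E f = 1 \<and> \<chi> f = c"
  by (auto simp: supports_def Vk_def)

lemma inner_iff: "x \<in> inner \<longleftrightarrow> x \<in> V \<and> x \<notin> supports \<and> (\<forall>f\<in>supports. \<not> E x f)"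
  by (auto simp: interior_set_def closed_nbhd_set_def nbhd_set_def nbhd_def supports_def)

lemma support_private_leaf:
  assumes "f \<in> supports"
  obtains l where "l \<in> V" "E f l" "nbhd E l = {f}" "\<chi> l \<noteq> c"
proof -
  obtain l where l: "E f l" "leaf V E l"
    using whole.leaf_neighbor_if_vheight_1 assms
    by (metis induced_eq_if_simple_graph simple supports_iff)
  then show thesis
    using that tree_leaf_nbhd assms supports_iff proper
    by (metis leaf_def proper_2_coloring_def)
qed

lemma support_has_private_neighbor:
  "f \<in> supports \<Longrightarrow> has_private_neighbor V E \<chi> c X f"
  by (rule support_private_leaf) (auto simp: has_private_neighbor_def nbhd_def)

lemma support_not_inner: "f \<in> supports \<Longrightarrow> f \<notin> inner"
  and support_neighbor_not_inner: "f \<in> supports \<Longrightarrow> E f x \<Longrightarrow> x \<notin> inner"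
  using inner_iff E_sym by blast+

lemma other_color_inner_neighbor:
  assumes "r \<in> inner" "\<chi> r \<noteq> c" "E r y"
  shows "y \<in> inner"
proof -
  have "\<chi> y = c" using other_color[OF E_sym[OF assms(3)] assms(2)] .
  then have "\<not> E y f" if "f \<in> supports" for f
    using that proper supports_iff by (metis proper_2_coloring_def)
  moreover have "y \<notin> supports" using assms(1,3) inner_iff by blast
  ultimately show ?thesis using inner_iff E_in(2)[OF assms(3)] by blast
qed

lemma other_color_inner_two_neighbors:
  assumes "r \<in> inner" "\<chi> r \<noteq> c"
  obtains y1 y2 where "E r y1" "E r y2" "y1 \<noteq> y2"
proof (rule ccontr)
  assume no_two: "\<not> thesis"
  have "r \<in> V" using assms(1) inner_iff by blast
  then obtain y where y: "E r y" using has_neighbor by blast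
  have "nbhd E r = {y}" using no_two that y E_sym unfolding nbhd_def by blast
  then have leaf_r: "leaf V E r" using \<open>r \<in> V\<close> by (simp add: leaf_def)
  then have "\<not> leaf V E y" using no_adjacent_leaves[OF y] by blast
  then have "vheight V E y = 1"
    using whole.vheight_eq_1_if_leaf_neighbor[of y r] E_in(2)[OF y] E_sym[OF y] leaf_r
    by (simp add: induced_eq_if_simple_graph[OF simple])
  moreover have "\<chi> y = c" using other_color[OF E_sym[OF y] assms(2)] .
  ultimately have "y \<in> supports" using supports_iff E_in(2)[OF y] by blast
  then show False using assms(1) y inner_iff by blast
qed

lemma color_not_inner_support: "x \<in> V \<Longrightarrow> \<chi> x = c \<Longrightarrow> x \<notin> inner \<Longrightarrow> x \<in> supports"
  using inner_iff supports_iff proper by (metis proper_2_coloring_def)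

lemma other_color_not_inner:
  assumes "r \<in> V" "\<chi> r \<noteq> c" "r \<notin> inner"
  obtains f where "f \<in> supports" "E f r"
  using assms inner_iff supports_iff E_sym by metis

lemma supports_subset_cover:
  assumes "color_cover V E \<chi> c D"
  shows "supports \<subseteq> D"
proof
  fix f assume "f \<in> supports"
  then obtain l where l: "l \<in> V" "E f l" "nbhd E l = {f}" "\<chi> l \<noteq> c"
    by (rule support_private_leaf)
  then obtain d where d: "d \<in> D" "E d l" using assms by (auto simp: color_cover_def)
  then have "d = f" using l(3) by (auto simp: nbhd_def)
  then show "f \<in> D" using d(1) by simp
qed

lemma cover_outside_supports_inner:
  "color_cover V E \<chi> c D \<Longrightarrow> d \<in> D \<Longrightarrow> d \<notin> supports \<Longrightarrow> d \<in> inner"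
  using color_not_inner_support by (auto simp: color_cover_def)

lemma minimal_cover_private_inner_neighbor:
  assumes m: "minimal_color_cover V E \<chi> c D" and d: "d \<in> D" "d \<notin> supports"
  obtains p where "p \<in> inner" "E d p" "\<forall>d'\<in>D. E d' p \<longrightarrow> d' = d"
proof -
  obtain p where p: "p \<in> V" "\<chi> p \<noteq> c" "E d p" "\<forall>d'\<in>D. E d' p \<longrightarrow> d' = d"
    using minimal_color_cover_private[OF m d(1)] unfolding has_private_neighbor_def by blast
  have "supports \<subseteq> D" using m supports_subset_cover by (simp add: minimal_color_cover_def)
  then have "p \<in> inner" using other_color_not_inner[OF p(1,2)] p(4) d by blast
  then show thesis using that p by blast
qed

end

locale interior_component = colored_tree +
  fixes C :: "'a set"
  assumes component: "C \<in> components inner (induced E inner)"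
begin

lemma symp_E: "symp E"
  using E_sym by (blast intro: sympI)

lemma C_eq_component_of:
  obtains x0 where "x0 \<in> inner" "C = component_of E inner x0"
proof -
  have "C \<in> component_of E inner ` inner"
    using component by (simp only: components_eq_component_of)
  then show thesis using that by auto
qed

lemma C_subset_inner: "C \<subseteq> inner" and C_nonempty: "C \<noteq> {}"
  using components_subset_nonempty[OF component] by blast+

lemma C_closed: "y \<in> C \<Longrightarrow> z \<in> inner \<Longrightarrow> E y z \<Longrightarrow> z \<in> C"
  using component_of_closed by (metis C_eq_component_of)

lemma component_of_C: "x \<in> C \<Longrightarrow> component_of E inner x = C"
  using component_of_eq[OF symp_E] by (metis C_eq_component_of)

sublocale induced_subforest V E C
  using tree C_subset_inner inner_iff by unfold_locales blast+

lemma G_iff: "G a b \<longleftrightarrow> E a b \<and> a \<in> C \<and> b \<in> C"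
  by (simp add: induced_def)

lemma G_proper: "G a b \<Longrightarrow> \<chi> a \<noteq> \<chi> b"
  using proper by (simp add: induced_def proper_2_coloring_def)

lemma other_color_edge: "r \<in> C \<Longrightarrow> \<chi> r \<noteq> c \<Longrightarrow> E r y \<Longrightarrow> G r y"
  using other_color_inner_neighbor C_subset_inner C_closed G_iff by blast

lemma other_color_not_leaf:
  assumes "r \<in> C" "\<chi> r \<noteq> c"
  shows "\<not> leaf C G r" "nbhd G r \<noteq> {}"
proof -
  obtain y1 y2 where y: "E r y1" "E r y2" "y1 \<noteq> y2"
    using other_color_inner_two_neighbors assms C_subset_inner by blast
  then have "{y1, y2} \<subseteq> nbhd G r" using other_color_edge[OF assms] in_nbhd_iff by blast
  then have "card {y1, y2} \<le> card (nbhd G r)" by (rule card_mono[OF finite_nbhd])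
  then have "2 \<le> card (nbhd G r)" using y(3) by simp
  then show "\<not> leaf C G r" "nbhd G r \<noteq> {}" by (auto simp: leaf_def)
qed

lemma leaf_color: "leaf C G u \<Longrightarrow> \<chi> u = c"
  using other_color_not_leaf(1) by (auto simp: leaf_def)

lemma color_iff_even_vheight:
  assumes "x \<in> C"
  shows "\<chi> x = c \<longleftrightarrow> even (h x)"
proof (cases "nbhd G x = {}")
  case True
  then show ?thesis using other_color_not_leaf(2)[OF assms] vheight_isolated by auto
next
  case False
  obtain u where u: "leaf C G u" "(G ^^ h x) x u" using leaf_at_vheight[OF assms False] by blast
  have "\<chi> u = \<chi> x \<longleftrightarrow> even (h x)" using relpowp_color_parity[OF G_proper u(2)] .
  then show ?thesis using leaf_color[OF u(1)] by auto
qed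

lemma leaf_unique_inner_neighbor:
  assumes "leaf C G l" "G x l" "z \<in> inner" "E l z"
  shows "z = x"
proof -
  have "l \<in> C" using assms(1) by (simp add: leaf_def)
  then have "G l z" using assms(3,4) C_closed G_iff by blast
  then show ?thesis using leaf_nbhd[OF assms(1,2)] in_nbhd_iff by blast
qed

lemma height_conditionsD:
  assumes "height_conditions E C"
  shows "x \<in> C \<Longrightarrow> h x \<le> 3"
    and "v \<in> C \<Longrightarrow> h v = 2 \<Longrightarrow> card (nbhd G v \<inter> Vk C G 1) = 1"
    and "w \<in> C \<Longrightarrow> h w = 1 \<Longrightarrow> card (nbhd G w \<inter> Vk C G 2) \<le> 1"
  using assms gheight_le_iff[OF C_nonempty] by (auto simp: height_conditions_def Vk_def)

lemma height_conditionsI: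
  assumes "\<And>x. x \<in> C \<Longrightarrow> h x \<le> 3"
    and "\<And>v. v \<in> C \<Longrightarrow> h v = 2 \<Longrightarrow> card (nbhd G v \<inter> Vk C G 1) = 1"
    and "\<And>w. w \<in> C \<Longrightarrow> h w = 1 \<Longrightarrow> card (nbhd G w \<inter> Vk C G 2) \<le> 1"
  shows "height_conditions E C"
  using assms gheight_le_iff[OF C_nonempty] by (auto simp: height_conditions_def Vk_def)

end

section \<open>Sufficiency of the height conditions\<close>

context interior_component
begin

context
  fixes D assumes hc: "height_conditions E C" and min: "minimal_color_cover V E \<chi> c D"
begin

lemma cover_vertex_cases:
  assumes d: "d \<in> D" "d \<in> C"
  obtains p where "G d p" "\<forall>d'\<in>D. E d' p \<longrightarrow> d' = d" "leaf C G d \<or> h d = 2"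
proof -
  have "d \<notin> supports" using d(2) C_subset_inner support_not_inner by blast
  then obtain p where p: "p \<in> inner" "E d p" "\<forall>d'\<in>D. E d' p \<longrightarrow> d' = d"
    using minimal_cover_private_inner_neighbor[OF min d(1)] by blast
  have Gdp: "G d p" using p d(2) C_closed G_iff by blast
  have "\<chi> d = c" using min d(1) unfolding minimal_color_cover_def color_cover_def by blast
  then have "even (h d)" using color_iff_even_vheight d(2) by blast
  moreover have "h d \<le> 3" using height_conditionsD(1)[OF hc d(2)] .
  ultimately have "h d = 0 \<or> h d = 2" by (auto simp: le_Suc_eq numeral_3_eq_3)
  moreover have "h d = 0 \<Longrightarrow> leaf C G d"
    using leaf_if_vheight_0[OF d(2)] Gdp in_nbhd_iff by blast
  ultimately show thesis using that Gdp p(3) by blast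
qed

lemma cover_vertex_height_one_neighbor:
  assumes d: "d \<in> D" "d \<in> C"
  obtains z where "z \<in> C" "h z = 1" "E d z"
proof -
  obtain p where p: "G d p" "leaf C G d \<or> h d = 2" by (rule cover_vertex_cases[OF d])
  show thesis
  proof (cases "h d = 2")
    case True
    then have "card (nbhd G d \<inter> Vk C G 1) = 1" using height_conditionsD(2)[OF hc d(2)] by blast
    then obtain z where "z \<in> nbhd G d \<inter> Vk C G 1" by (metis card_1_singletonE singletonI)
    then show thesis using that G_iff in_nbhd_iff by (auto simp: Vk_def)
  next
    case False
    then have "leaf C G d" using p by blast
    moreover have "p \<in> C" "\<chi> p \<noteq> c" using p(1) G_iff leaf_color[OF \<open>leaf C G d\<close>] G_proper
      by metis+
    ultimately have "h p = 1"
      using vheight_eq_1_if_leaf_neighbor G_sym[OF p(1)] other_color_not_leaf(1) by blast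
    then show thesis using that \<open>p \<in> C\<close> p(1) G_iff by blast
  qed
qed

lemma cover_vertex_height_one_neighbor_unique:
  assumes d: "d \<in> D" "d \<in> C"
    and z: "z \<in> C" "h z = 1" "E d z" and z': "z' \<in> C" "h z' = 1" "E d z'"
  shows "z = z'"
proof -
  obtain p where p: "G d p" "leaf C G d \<or> h d = 2" by (rule cover_vertex_cases[OF d])
  have "z \<in> nbhd G d" "z' \<in> nbhd G d" using z z' d(2) G_iff in_nbhd_iff by blast+
  show ?thesis
  proof (cases "h d = 2")
    case True
    then have "card (nbhd G d \<inter> Vk C G 1) = 1" using height_conditionsD(2)[OF hc d(2)] by blast
    moreover have "z \<in> nbhd G d \<inter> Vk C G 1" "z' \<in> nbhd G d \<inter> Vk C G 1"
      using \<open>z \<in> nbhd G d\<close> \<open>z' \<in> nbhd G d\<close> z z' by (auto simp: Vk_def)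
    ultimately show ?thesis by (metis card_1_singletonE singletonD)
  next
    case False
    then have "nbhd G d = {p}" using p leaf_nbhd G_sym by blast
    then show ?thesis using \<open>z \<in> nbhd G d\<close> \<open>z' \<in> nbhd G d\<close> by simp
  qed
qed

lemma height_one_cover_neighbor_unique:
  assumes d1: "d1 \<in> D" "d1 \<in> C" and d2: "d2 \<in> D" "d2 \<in> C"
    and z: "z \<in> C" "h z = 1" "E d1 z" "E d2 z"
  shows "d1 = d2"
proof -
  have leaf_case: "da = db"
    if da: "da \<in> D" "da \<in> C" "leaf C G da" and "db \<in> D" "E da z" "E db z" for da db
  proof -
    obtain p where p: "G da p" "\<forall>d'\<in>D. E d' p \<longrightarrow> d' = da" by (rule cover_vertex_cases[OF da(1,2)])
    have "G z da" using z(1) da(2) \<open>E da z\<close> E_sym G_iff by blast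
    then have "z = p" using leaf_nbhd[OF da(3)] G_sym[OF p(1)] in_nbhd_iff by blast
    then show "da = db" using p(2) \<open>db \<in> D\<close> \<open>E db z\<close> by blast
  qed
  have shape: "leaf C G d \<or> h d = 2" if "d \<in> D" "d \<in> C" for d
    by (rule cover_vertex_cases[OF that]) blast
  consider "leaf C G d1" | "leaf C G d2" | "h d1 = 2" "h d2 = 2"
    using shape[OF d1] shape[OF d2] by blast
  then show ?thesis
  proof cases
    case 1
    then show ?thesis using leaf_case[OF d1 _ d2(1) z(3,4)] by blast
  next
    case 2
    then show ?thesis using leaf_case[OF d2 2 d1(1) z(4,3)] by simp
  next
    case 3
    have "G z d1" "G z d2" using d1(2) d2(2) z E_sym G_iff by blast+
    then have in_N: "d1 \<in> nbhd G z \<inter> Vk C G 2" "d2 \<in> nbhd G z \<inter> Vk C G 2"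
      using 3 d1(2) d2(2) in_nbhd_iff by (auto simp: Vk_def)
    have "finite (nbhd G z \<inter> Vk C G 2)" using finite_nbhd by simp
    moreover have "card (nbhd G z \<inter> Vk C G 2) \<le> Suc 0"
      using height_conditionsD(3)[OF hc z(1,2)] by simp
    ultimately show ?thesis using card_le_Suc0_iff_eq in_N by blast
  qed
qed

end

end

context colored_tree
begin

lemma interior_component_component_of:
  "x \<in> inner \<Longrightarrow> interior_component V E \<chi> c (component_of E inner x)"
  by (intro interior_component.intro colored_tree.intro bipartite_graph_axioms
      colored_tree_axioms interior_component_axioms.intro)
    (simp add: components_eq_component_of)

definition height_one where
  "height_one =
    {z \<in> inner. vheight (component_of E inner z) (induced E (component_of E inner z)) z = 1}"

context
  fixes D assumes min: "minimal_color_cover V E \<chi> c D"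
begin

lemma D_cover: "color_cover V E \<chi> c D"
  using min by (simp add: minimal_color_cover_def)

lemma height_one_cover_neighbor:
  assumes z: "z \<in> height_one"
  obtains d where "d \<in> D" "d \<notin> supports" "E d z"
proof -
  have z_inner: "z \<in> inner" using z by (simp add: height_one_def)
  interpret K: interior_component V E \<chi> c "component_of E inner z"
    by (rule interior_component_component_of[OF z_inner])
  have "K.h z = 1" using z by (simp add: height_one_def)
  then have "\<chi> z \<noteq> c" using K.color_iff_even_vheight[OF component_of_self[OF z_inner]] by simp
  then obtain d where d: "d \<in> D" "E d z"
    using D_cover z_inner inner_iff unfolding color_cover_def by blast
  moreover have "d \<notin> supports" using support_neighbor_not_inner d(2) z_inner by blast
  ultimately show thesis using that by blast
qed

context
  assumes hc: "\<forall>C\<in>components inner (induced E inner). height_conditions E C"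
begin

lemma cover_vertex_unique_height_one_neighbor:
  assumes d: "d \<in> D" "d \<notin> supports"
  shows "\<exists>!z. z \<in> height_one \<and> E d z"
proof -
  have d_inner: "d \<in> inner" using cover_outside_supports_inner[OF D_cover d] .
  interpret K: interior_component V E \<chi> c "component_of E inner d"
    by (rule interior_component_component_of[OF d_inner])
  have hcK: "height_conditions E (component_of E inner d)" using hc K.component by blast
  have dK: "d \<in> component_of E inner d" using component_of_self[OF d_inner] .
  have height_one_iff: "z \<in> height_one \<longleftrightarrow> K.h z = 1" if "z \<in> component_of E inner d" for z
    using that K.component_of_C K.C_subset_inner by (auto simp: height_one_def)
  obtain z where z: "z \<in> component_of E inner d" "K.h z = 1" "E d z"
    by (rule K.cover_vertex_height_one_neighbor[OF hcK min d(1) dK])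
  show ?thesis
  proof (rule ex1I[of _ z])
    show "z \<in> height_one \<and> E d z" using z height_one_iff by blast
  next
    fix z' assume z': "z' \<in> height_one \<and> E d z'"
    then have "z' \<in> component_of E inner d"
      using K.C_closed dK by (auto simp: height_one_def)
    then show "z' = z"
      using K.cover_vertex_height_one_neighbor_unique[OF hcK min d(1) dK] z z' height_one_iff
      by blast
  qed
qed

lemma height_one_unique_cover_neighbor:
  assumes d1: "d1 \<in> D" "d1 \<notin> supports" and d2: "d2 \<in> D" "d2 \<notin> supports"
    and z: "z \<in> height_one" "E d1 z" "E d2 z"
  shows "d1 = d2"
proof -
  have z_inner: "z \<in> inner" using z(1) by (simp add: height_one_def)
  interpret K: interior_component V E \<chi> c "component_of E inner z"
    by (rule interior_component_component_of[OF z_inner])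
  have hcK: "height_conditions E (component_of E inner z)" using hc K.component by blast
  have zK: "z \<in> component_of E inner z" using component_of_self[OF z_inner] .
  have "d1 \<in> inner" "d2 \<in> inner"
    using cover_outside_supports_inner[OF D_cover] d1 d2 by blast+
  then have "d1 \<in> component_of E inner z" "d2 \<in> component_of E inner z"
    using K.C_closed[OF zK] E_sym z(2,3) by blast+
  moreover have "K.h z = 1" using z(1) by (simp add: height_one_def)
  ultimately show ?thesis
    using K.height_one_cover_neighbor_unique[OF hcK min d1(1) _ d2(1) _ zK] z(2,3) by blast
qed

lemma card_minimal_color_cover: "card D = card supports + card height_one"
proof -
  define nb where "nb d = (THE z. z \<in> height_one \<and> E d z)" for d
  have nb: "nb d \<in> height_one \<and> E d (nb d)" if "d \<in> D - supports" for d
    unfolding nb_def using theI'[OF cover_vertex_unique_height_one_neighbor] that by blast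
  have "bij_betw nb (D - supports) height_one"
    unfolding bij_betw_def
  proof
    show "inj_on nb (D - supports)"
    proof (rule inj_onI)
      fix d1 d2 assume d: "d1 \<in> D - supports" "d2 \<in> D - supports" "nb d1 = nb d2"
      then show "d1 = d2"
        using nb[OF d(1)] nb[OF d(2)] height_one_unique_cover_neighbor[of d1 d2 "nb d1"] by auto
    qed
    show "nb ` (D - supports) = height_one"
    proof
      show "nb ` (D - supports) \<subseteq> height_one" using nb by blast
    next
      show "height_one \<subseteq> nb ` (D - supports)"
      proof
        fix z assume z: "z \<in> height_one"
        then obtain d where d: "d \<in> D" "d \<notin> supports" "E d z" by (rule height_one_cover_neighbor)
        then have "nb d = z"
          using the1_equality[OF cover_vertex_unique_height_one_neighbor[OF d(1,2)]] z
          unfolding nb_def by blast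
        then show "z \<in> nb ` (D - supports)" using d(1,2) by blast
      qed
    qed
  qed
  then have "card (D - supports) = card height_one" by (rule bij_betw_same_card)
  moreover have "finite D"
    using D_cover finite_subset[OF _ finite_V] by (simp add: color_cover_def)
  moreover have "supports \<subseteq> D" using supports_subset_cover[OF D_cover] .
  ultimately show ?thesis by (metis card_Diff_subset card_mono finite_subset le_add_diff_inverse)
qed

end

end

lemma color_unmixed_if_height_conditions:
  "\<forall>C\<in>components inner (induced E inner). height_conditions E C \<Longrightarrow> color_unmixed V E \<chi> c"
  unfolding color_unmixed_def using card_minimal_color_cover by metis

end

section \<open>Necessity of the height conditions\<close>

text \<open>In the configuration below, \<open>e\<close> hangs off \<open>r\<close> inside the interior graph and every
  other interior neighbor \<open>q\<close> of \<open>b\<close> continues to a path \<open>q - B q - P q\<close>. Color-\<open>c\<close>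
  vertices that would give \<open>q1\<close>, \<open>r\<close> or some \<open>P q\<close> a second neighbor are left out of
  the cover \<open>X\<close>, so that \<open>b\<close>, \<open>e\<close> and all \<open>B q\<close> are forced in \<open>X\<close>. The single vertex \<open>y\<close> then
  takes over the duties of both \<open>b\<close> and \<open>e\<close>.\<close>

locale exchange_configuration = colored_tree +
  fixes b q1 y r e :: 'a and B P :: "'a \<Rightarrow> 'a"
  assumes b: "b \<in> inner" "\<chi> b = c"
    and q1: "q1 \<in> inner" "E b q1"
    and y: "E y q1" "y \<noteq> b"
    and r: "r \<in> inner" "E y r" "r \<noteq> q1"
    and e: "e \<in> inner" "\<chi> e = c" "E e r" "\<forall>z\<in>inner. E e z \<longrightarrow> z = r"
    and branch: "\<And>q. q \<in> inner \<Longrightarrow> E b q \<Longrightarrow> q \<noteq> q1 \<Longrightarrow>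
      E (B q) q \<and> B q \<noteq> b \<and> P q \<in> inner \<and> E (P q) (B q) \<and> P q \<noteq> q"
begin

definition Q where "Q = {q \<in> inner. E b q \<and> q \<noteq> q1}"

lemma Q_D: "q \<in> Q \<Longrightarrow> q \<in> inner" "q \<in> Q \<Longrightarrow> E b q" "q \<in> Q \<Longrightarrow> q \<noteq> q1"
  by (simp_all add: Q_def)

lemma branch_path: assumes "q \<in> Q"
  shows "E (B q) q" "B q \<noteq> b" "P q \<in> inner" "E (P q) (B q)" "P q \<noteq> q"
  using branch[OF Q_D[OF assms]] by blast+

lemma colors: "\<chi> q1 \<noteq> c" "\<chi> y = c" "\<chi> r \<noteq> c"
  and colors_Q: "q \<in> Q \<Longrightarrow> \<chi> q \<noteq> c" "q \<in> Q \<Longrightarrow> \<chi> (B q) = c" "q \<in> Q \<Longrightarrow> \<chi> (P q) \<noteq> c"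
  using proper b(2) q1(2) y(1) r(2) Q_D(2) branch_path(1,4) other_color
  unfolding proper_2_coloring_def by metis+

lemma distinct_vertices: "b \<noteq> q1" "b \<noteq> r" "b \<noteq> y"
  and distinct_vertices_Q: "q \<in> Q \<Longrightarrow> b \<noteq> q" "q \<in> Q \<Longrightarrow> b \<noteq> P q"
  using simple_graph_edgeD(3)[OF simple] q1(2) y(2) Q_D(2) colors colors_Q b(2) by metis+

lemma no_cycle_through_b:
  "successively E xs \<Longrightarrow> xs \<noteq> [] \<Longrightarrow> hd xs \<noteq> last xs \<Longrightarrow> b \<notin> set xs \<Longrightarrow>
    E b (hd xs) \<Longrightarrow> E b (last xs) \<Longrightarrow> False"
  using tree_walk_no_common_neighbor[OF tree] by blast

lemma b_not_adj_r: "\<not> E b r"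
  using no_cycle_through_b[of "[q1, y, r]"] E_sym[OF y(1)] r(2,3) q1(2) distinct_vertices y(2)
  by auto

lemma b_not_adj_P: "q \<in> Q \<Longrightarrow> \<not> E b (P q)"
  using no_cycle_through_b[of "[q, B q, P q]"] branch_path[of q]
    E_sym[of "B q" q] E_sym[of "P q" "B q"]
    distinct_vertices_Q[of q] Q_D(2)[of q] by auto

lemma B_not_adj_r: "q \<in> Q \<Longrightarrow> \<not> E (B q) r"
  using no_cycle_through_b[of "[q, B q, r, y, q1]"] branch_path[of q]
    E_sym[of "B q" q] E_sym[of y r]
    y r(2) distinct_vertices distinct_vertices_Q[of q] Q_D[of q] q1(2) by auto

lemma B_adj_q1: "q \<in> Q \<Longrightarrow> E (B q) q1 \<Longrightarrow> B q = b"
  using no_cycle_through_b[of "[q, B q, q1]"] branch_path[of q] E_sym[of "B q" q]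
    distinct_vertices distinct_vertices_Q[of q] Q_D[of q] q1(2) by auto

lemma B_adj_P: "q \<in> Q \<Longrightarrow> q' \<in> Q \<Longrightarrow> E (B q) (P q') \<Longrightarrow> B q = B q'"
  using no_cycle_through_b[of "[q, B q, P q', B q', q']"] branch_path[of q] branch_path[of q']
    E_sym[of "B q" q] E_sym[of "P q'" "B q'"] distinct_vertices_Q[of q] distinct_vertices_Q[of q']
    Q_D[of q] Q_D[of q']
  by (cases "q = q'") auto

lemma e_not_adj_q1: "\<not> E e q1" and e_not_adj_P: "q \<in> Q \<Longrightarrow> \<not> E e (P q)"
  using e(4) q1(1) r(3) B_not_adj_r branch_path(3,4) E_sym by blast+

lemma b_ne_e: "b \<noteq> e" and B_ne_e: "q \<in> Q \<Longrightarrow> B q \<noteq> e"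
  using e_not_adj_q1 q1(2) B_not_adj_r e(3) by blast+

definition excluded where
  "excluded = (nbhd E q1 - {b}) \<union> (nbhd E r - {e}) \<union> (\<Union>q\<in>Q. nbhd E (P q) - {B q})"

definition X where "X = (V \<inter> \<chi> -` {c}) - excluded"

lemma X_iff: "x \<in> X \<longleftrightarrow> x \<in> V \<and> \<chi> x = c \<and> (E x q1 \<longrightarrow> x = b) \<and> (E x r \<longrightarrow> x = e)
    \<and> (\<forall>q\<in>Q. E x (P q) \<longrightarrow> x = B q)"
  by (auto simp: X_def excluded_def nbhd_def)

lemma in_X: "b \<in> X" "e \<in> X" "q \<in> Q \<Longrightarrow> B q \<in> X" "supports \<subseteq> X"
proof -
  show "b \<in> X" using X_iff b(2) E_in(1)[OF q1(2)] b_not_adj_r b_not_adj_P by blast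
  show "e \<in> X" using X_iff e(2) E_in(1)[OF e(3)] e_not_adj_q1 e_not_adj_P by blast
  show "B q \<in> X" if "q \<in> Q"
    using X_iff E_in(1)[OF branch_path(1)[OF that]] colors_Q(2)[OF that] B_adj_q1[OF that]
      B_not_adj_r[OF that] B_adj_P[OF that] by blast
  show "supports \<subseteq> X"
    using X_iff supports_iff support_neighbor_not_inner q1(1) r(1) branch_path(3) by blast
qed

lemma private_in_X:
  "has_private_neighbor V E \<chi> c X b" "has_private_neighbor V E \<chi> c X e"
  "q \<in> Q \<Longrightarrow> has_private_neighbor V E \<chi> c X (B q)"
proof -
  have "q1 \<in> V" "r \<in> V" using q1(1) r(1) inner_iff by blast+
  then show "has_private_neighbor V E \<chi> c X b" "has_private_neighbor V E \<chi> c X e"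
    unfolding has_private_neighbor_def using X_iff q1(2) e(3) colors by blast+
  show "has_private_neighbor V E \<chi> c X (B q)" if "q \<in> Q"
  proof -
    have "P q \<in> V" using branch_path(3)[OF that] inner_iff by blast
    then show ?thesis
      unfolding has_private_neighbor_def
      using X_iff that E_sym[OF branch_path(4)[OF that]] colors_Q(3)[OF that] by blast
  qed
qed

definition core where
  "core = {b} \<union> nbhd E b \<union> nbhd E q1 \<union> {r} \<union> nbhd E r \<union> (\<Union>q\<in>Q. {B q, P q} \<union> nbhd E (P q))"

lemma excluded_subset_core: "excluded \<subseteq> core"
  unfolding excluded_def core_def by blast

lemma core_parts:
  "b \<in> core" "nbhd E b \<subseteq> core" "nbhd E q1 \<subseteq> core" "r \<in> core" "nbhd E r \<subseteq> core"
  "q \<in> Q \<Longrightarrow> B q \<in> core" "q \<in> Q \<Longrightarrow> P q \<in> core" "q \<in> Q \<Longrightarrow> nbhd E (P q) \<subseteq> core"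
  unfolding core_def by blast+

lemma core_reach_step:
  "(induced E core)\<^sup>*\<^sup>* b u \<Longrightarrow> E u v \<Longrightarrow> u \<in> core \<Longrightarrow> v \<in> core \<Longrightarrow> (induced E core)\<^sup>*\<^sup>* b v"
  by (simp add: induced_def rtranclp.rtrancl_into_rtrancl)

lemma core_reach_nbhd:
  assumes "(induced E core)\<^sup>*\<^sup>* b u" "u \<in> core" "nbhd E u \<subseteq> core" "a \<in> nbhd E u"
  shows "(induced E core)\<^sup>*\<^sup>* b a"
  using core_reach_step[OF assms(1) _ assms(2)] assms(3,4) E_sym by (auto simp: nbhd_def)

lemma core_connected: "\<forall>a\<in>core. (induced E core)\<^sup>*\<^sup>* b a"
proof
  have q1: "q1 \<in> nbhd E b" "q1 \<in> core" using q1(2) E_sym core_parts(2) by (auto simp: nbhd_def)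
  have to_b: "(induced E core)\<^sup>*\<^sup>* b b" by simp
  have to_q1: "(induced E core)\<^sup>*\<^sup>* b q1" using core_reach_nbhd[OF to_b core_parts(1,2) q1(1)] .
  have to_y: "(induced E core)\<^sup>*\<^sup>* b y"
    using core_reach_nbhd[OF to_q1 q1(2) core_parts(3)] y(1) by (simp add: nbhd_def)
  have to_r: "(induced E core)\<^sup>*\<^sup>* b r"
    using core_reach_step[OF to_y r(2) _ core_parts(4)] y(1) core_parts(3) by (auto simp: nbhd_def)
  have to_P: "(induced E core)\<^sup>*\<^sup>* b (B q)" "(induced E core)\<^sup>*\<^sup>* b (P q)" if "q \<in> Q" for q
  proof -
    have q: "q \<in> nbhd E b" "q \<in> core"
      using Q_D(2)[OF that] E_sym core_parts(2) by (auto simp: nbhd_def)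
    have "(induced E core)\<^sup>*\<^sup>* b q" using core_reach_nbhd[OF to_b core_parts(1,2) q(1)] .
    then show B: "(induced E core)\<^sup>*\<^sup>* b (B q)"
      using core_reach_step E_sym[OF branch_path(1)[OF that]] q(2) core_parts(6)[OF that] by blast
    show "(induced E core)\<^sup>*\<^sup>* b (P q)"
      using core_reach_step[OF B E_sym[OF branch_path(4)[OF that]]] core_parts(6,7)[OF that]
      by blast
  qed
  fix a assume "a \<in> core"
  then consider "a = b" | "a \<in> nbhd E b" | "a \<in> nbhd E q1" | "a = r" | "a \<in> nbhd E r"
    | q where "q \<in> Q" "a \<in> {B q, P q}" | q where "q \<in> Q" "a \<in> nbhd E (P q)"
    unfolding core_def by blast
  then show "(induced E core)\<^sup>*\<^sup>* b a"
  proof cases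
    case 2
    then show ?thesis using core_reach_nbhd[OF to_b core_parts(1,2)] by blast
  next
    case 3
    then show ?thesis using core_reach_nbhd[OF to_q1 q1(2) core_parts(3)] by blast
  next
    case 5
    then show ?thesis using core_reach_nbhd[OF to_r core_parts(4,5)] by blast
  next
    case (7 q)
    then show ?thesis using core_reach_nbhd[OF to_P(2) core_parts(7,8)] by blast
  qed (use to_b to_r to_P in blast)+
qed

lemma X_neighbor_outside_core:
  assumes "z \<in> inner" "\<chi> z \<noteq> c" "z \<notin> core"
  shows "\<exists>d\<in>X. E d z"
proof -
  obtain y1 y2 where "E z y1" "E z y2" "y1 \<noteq> y2"
    using other_color_inner_two_neighbors[OF assms(1,2)] .
  then obtain w where w: "E z w" "w \<notin> core"
    using tree_connected_set_unique_neighbor[OF tree core_connected _ _ assms(3)] by blast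
  then have "w \<in> X"
    using excluded_subset_core E_in(2) other_color[OF E_sym[OF w(1)] assms(2)] by (auto simp: X_def)
  then show ?thesis using w(1) E_sym by blast
qed

lemma X_cover: "color_cover V E \<chi> c X"
  unfolding color_cover_def
proof (intro conjI ballI impI)
  fix z assume z: "z \<in> V" "\<chi> z \<noteq> c"
  show "\<exists>d\<in>X. E d z"
  proof (cases "z \<in> inner")
    case False
    then show ?thesis using other_color_not_inner[OF z] in_X(4) by blast
  next
    case z_inner: True
    consider "z = q1" | "z = r" | "z \<in> Q" | q where "q \<in> Q" "z = P q" | "z \<notin> core"
    proof -
      have "z \<in> Q \<or> z = q1" if "z \<in> nbhd E b"
        using that z_inner E_sym unfolding Q_def nbhd_def by blast
      moreover have "z \<notin> nbhd E q1 \<and> z \<notin> nbhd E r \<and> z \<noteq> b \<and> (\<forall>q\<in>Q. z \<noteq> B q \<and> z \<notin> nbhd E (P q))"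
        using z(2) b(2) colors colors_Q other_color by (auto simp: nbhd_def)
      ultimately show thesis using that unfolding core_def by blast
    qed
    then show ?thesis
    proof cases
      case 3
      then show ?thesis using in_X(3) branch_path(1) by blast
    next
      case (4 q)
      then show ?thesis using in_X(3) branch_path(4) E_sym by blast
    next
      case 5
      then show ?thesis using X_neighbor_outside_core z_inner z(2) by blast
    qed (use q1(2) e(3) in_X in blast)+
  qed
qed (auto simp: X_def)

lemma not_color_unmixed: "\<not> color_unmixed V E \<chi> c"
proof (rule not_color_unmixed_by_exchange[OF finite_V X_cover, of "{b, e}" "{y}"])
  show "\<forall>z\<in>V. \<chi> z \<noteq> c \<longrightarrow> (\<forall>x\<in>{b, e}. E x z \<longrightarrow>
      (\<exists>a\<in>{y}. E a z) \<or> (\<exists>w\<in>X - {b, e}. has_private_neighbor V E \<chi> c X w \<and> E w z))"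
  proof (intro ballI impI)
    fix z x assume z: "z \<in> V" "\<chi> z \<noteq> c" and x: "x \<in> {b, e}" "E x z"
    show "(\<exists>a\<in>{y}. E a z) \<or> (\<exists>w\<in>X - {b, e}. has_private_neighbor V E \<chi> c X w \<and> E w z)"
    proof (cases "z \<in> inner")
      case False
      then obtain f where "f \<in> supports" "E f z" using other_color_not_inner[OF z] by blast
      moreover have "f \<noteq> b" "f \<noteq> e" using \<open>f \<in> supports\<close> support_not_inner b(1) e(1) by blast+
      ultimately show ?thesis using in_X(4) support_has_private_neighbor by blast
    next
      case True
      consider "x = b" "z = q1" | "x = b" "z \<in> Q" | "x = e" "z = r"
        using x True e(4) unfolding Q_def by blast
      then show ?thesis
      proof cases
        case 2
        then show ?thesis using in_X(3) branch_path(1,2) B_ne_e private_in_X(3) by blast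
      qed (use y(1) r(2) in blast)+
    qed
  qed
qed (use in_X private_in_X b_ne_e E_in(1)[OF y(1)] colors in auto)

end

context interior_component
begin

lemma not_color_unmixed_if_path_to_leaf:
  assumes b: "b \<in> C" "\<chi> b = c" and path: "G b q1" "G q1 y" "y \<noteq> b" "G y r" "r \<noteq> q1"
    and e: "leaf C G e" "G r e"
    and branch: "\<And>q. G b q \<Longrightarrow> q \<noteq> q1 \<Longrightarrow> \<exists>\<beta> \<pi>. E \<beta> q \<and> \<beta> \<noteq> b \<and> \<pi> \<in> inner \<and> E \<pi> \<beta> \<and> \<pi> \<noteq> q"
  shows "\<not> color_unmixed V E \<chi> c"
proof -
  have "\<forall>q. \<exists>\<beta>\<pi>. q \<in> inner \<longrightarrow> E b q \<longrightarrow> q \<noteq> q1 \<longrightarrow> E (fst \<beta>\<pi>) q \<and> fst \<beta>\<pi> \<noteq> b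
      \<and> snd \<beta>\<pi> \<in> inner \<and> E (snd \<beta>\<pi>) (fst \<beta>\<pi>) \<and> snd \<beta>\<pi> \<noteq> q"
  proof
    fix q
    show "\<exists>\<beta>\<pi>. q \<in> inner \<longrightarrow> E b q \<longrightarrow> q \<noteq> q1 \<longrightarrow> E (fst \<beta>\<pi>) q \<and> fst \<beta>\<pi> \<noteq> b
      \<and> snd \<beta>\<pi> \<in> inner \<and> E (snd \<beta>\<pi>) (fst \<beta>\<pi>) \<and> snd \<beta>\<pi> \<noteq> q"
    proof (cases "q \<in> inner \<and> E b q \<and> q \<noteq> q1")
      case True
      then have "G b q" using C_closed[OF b(1)] G_iff b(1) by blast
      then obtain \<beta> \<pi> where "E \<beta> q \<and> \<beta> \<noteq> b \<and> \<pi> \<in> inner \<and> E \<pi> \<beta> \<and> \<pi> \<noteq> q"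
        using branch True by blast
      then show ?thesis by (intro exI[of _ "(\<beta>, \<pi>)"]) simp
    qed simp
  qed
  from choice[OF this] obtain f where f: "\<forall>q. q \<in> inner \<longrightarrow> E b q \<longrightarrow> q \<noteq> q1 \<longrightarrow>
      E (fst (f q)) q \<and> fst (f q) \<noteq> b \<and> snd (f q) \<in> inner \<and> E (snd (f q)) (fst (f q))
      \<and> snd (f q) \<noteq> q"
    by blast
  have "b \<in> inner" "q1 \<in> inner" "r \<in> inner" "e \<in> inner"
    using b(1) G_in(2)[OF path(1)] G_in(2)[OF path(4)] G_in(2)[OF e(2)] C_subset_inner by blast+
  moreover have "E b q1" "E y q1" "E y r" "E e r"
    using path(1,4) G_sym[OF path(2)] G_sym[OF e(2)] by (simp_all add: G_iff)
  moreover have "\<forall>z\<in>inner. E e z \<longrightarrow> z = r"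
    using leaf_unique_inner_neighbor[OF e(1) e(2)] by blast
  ultimately interpret exchange_configuration V E \<chi> c b q1 y r e "\<lambda>q. fst (f q)" "\<lambda>q. snd (f q)"
    by (intro exchange_configuration.intro colored_tree.intro bipartite_graph_axioms
        colored_tree_axioms exchange_configuration_axioms.intro b(2) path(3,5)
        leaf_color[OF e(1)] f[rule_format])
  show ?thesis by (rule not_color_unmixed)
qed

lemma branch_continues:
  assumes "q \<in> C" "\<chi> q \<noteq> c" "2 \<le> h q"
  shows "\<exists>\<beta> \<pi>. E \<beta> q \<and> \<beta> \<noteq> v \<and> \<pi> \<in> inner \<and> E \<pi> \<beta> \<and> \<pi> \<noteq> q"
proof -
  have "q \<in> inner" using assms(1) C_subset_inner by blast
  obtain y1 y2 where "E q y1" "E q y2" "y1 \<noteq> y2"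
    by (rule other_color_inner_two_neighbors[OF \<open>q \<in> inner\<close> assms(2)])
  then obtain \<beta> where "E q \<beta>" "\<beta> \<noteq> v" by blast
  then have q\<beta>: "G q \<beta>" using other_color_edge assms(1,2) by blast
  have "h q \<le> Suc (h \<beta>)" using vheight_edge_le[OF q\<beta>] .
  then have "h \<beta> \<noteq> 0" using assms(3) by linarith
  then obtain \<pi> where \<beta>\<pi>: "G \<beta> \<pi>" "\<pi> \<noteq> q"
    using other_neighbor_if_vheight_pos[OF G_in(2)[OF q\<beta>] _ G_sym[OF q\<beta>]] by blast
  have "E \<beta> q" "E \<pi> \<beta>" using G_sym[OF q\<beta>] G_sym[OF \<beta>\<pi>(1)] by (simp_all add: G_iff)
  moreover have "\<pi> \<in> inner" using G_in(2)[OF \<beta>\<pi>(1)] C_subset_inner by blast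
  ultimately show ?thesis using \<open>\<beta> \<noteq> v\<close> \<beta>\<pi>(2) by blast
qed

context
  assumes unmixed: "color_unmixed V E \<chi> c"
begin

lemma vheight_le_3: "x \<in> C \<Longrightarrow> h x \<le> 3"
proof (rule ccontr)
  assume "x \<in> C" "\<not> h x \<le> 3"
  then obtain b where b: "b \<in> C" "h b = Suc 3" using vheight_intermediate[of x 4] by auto
  obtain q1 where q1: "G b q1" "h q1 = 3" by (rule vheight_Suc_neighbor[OF b])
  have "h q1 = Suc 2" using q1(2) by simp
  then obtain y where y: "G q1 y" "h y = 2" by (rule vheight_Suc_neighbor[OF G_in(2)[OF q1(1)]])
  have "h y = Suc 1" using y(2) by simp
  then obtain r where r: "G y r" "h r = 1" by (rule vheight_Suc_neighbor[OF G_in(2)[OF y(1)]])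
  obtain e where e: "G r e" "leaf C G e"
    by (rule leaf_neighbor_if_vheight_1[OF G_in(2)[OF r(1)] r(2)])
  have "\<chi> b = c" using color_iff_even_vheight[OF b(1)] b(2) by simp
  have branch: "\<exists>\<beta> \<pi>. E \<beta> q \<and> \<beta> \<noteq> b \<and> \<pi> \<in> inner \<and> E \<pi> \<beta> \<and> \<pi> \<noteq> q"
    if "G b q" "q \<noteq> q1" for q
  proof (rule branch_continues)
    show "q \<in> C" using G_in(2)[OF that(1)] .
    show "\<chi> q \<noteq> c" using G_proper[OF that(1)] \<open>\<chi> b = c\<close> by simp
    show "2 \<le> h q" using vheight_edge_le[OF that(1)] b(2) by simp
  qed
  have "y \<noteq> b" "r \<noteq> q1" using b(2) q1(2) y(2) r(2) by auto
  then have "\<not> color_unmixed V E \<chi> c"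
    using not_color_unmixed_if_path_to_leaf[OF b(1) \<open>\<chi> b = c\<close> q1(1) y(1) _ r(1) _ e(2,1) branch]
    by blast
  then show False using unmixed by blast
qed

lemma card_height_one_nbhd:
  assumes v: "v \<in> C" "h v = 2"
  shows "card (nbhd G v \<inter> Vk C G 1) = 1"
proof (rule ccontr)
  let ?N = "nbhd G v \<inter> Vk C G 1"
  assume card_ne: "card ?N \<noteq> 1"
  have "h v = Suc 1" using v(2) by simp
  then obtain w where "G v w" "h w = 1" by (rule vheight_Suc_neighbor[OF v(1)])
  then have "w \<in> ?N" using in_nbhd_iff G_in(2) by (auto simp: Vk_def)
  moreover have fin: "finite ?N" using finite_nbhd by simp
  ultimately have "card ?N \<noteq> 0" by auto
  then have "\<not> card ?N \<le> Suc 0" using card_ne by simp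
  then obtain w1 w2 where w: "w1 \<in> ?N" "w2 \<in> ?N" "w1 \<noteq> w2"
    using card_le_Suc0_iff_eq[OF fin] by blast
  have w1: "G v w1" "h w1 = 1" "w1 \<in> C" and w2: "G v w2" "h w2 = 1" "w2 \<in> C"
    using w(1,2) in_nbhd_iff by (auto simp: Vk_def)
  obtain l1 where l1: "G w1 l1" "leaf C G l1" by (rule leaf_neighbor_if_vheight_1[OF w1(3,2)])
  obtain l2 where l2: "G w2 l2" "leaf C G l2" by (rule leaf_neighbor_if_vheight_1[OF w2(3,2)])
  have "l1 \<in> C" using l1(2) by (simp add: leaf_def)
  have "v \<noteq> l1" using vheight_leaf[OF l1(2)] v(2) by auto
  have branch: "\<exists>\<beta> \<pi>. E \<beta> q \<and> \<beta> \<noteq> l1 \<and> \<pi> \<in> inner \<and> E \<pi> \<beta> \<and> \<pi> \<noteq> q"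
    if "G l1 q" "q \<noteq> w1" for q
    using that leaf_nbhd[OF l1(2,1)] in_nbhd_iff by blast
  have "\<not> color_unmixed V E \<chi> c"
    using not_color_unmixed_if_path_to_leaf[OF \<open>l1 \<in> C\<close> leaf_color[OF l1(2)] G_sym[OF l1(1)]
        G_sym[OF w1(1)] \<open>v \<noteq> l1\<close> w2(1) w(3)[symmetric] l2(2,1) branch] .
  then show False using unmixed by blast
qed

lemma vheight_neighbor_eq_3:
  assumes v: "v \<in> C" "h v = 2" and w: "G v w" "h w = 1" and q: "G v q" "q \<noteq> w"
  shows "h q = 3"
proof -
  have "q \<in> C" using G_in(2)[OF q(1)] .
  obtain a where N: "nbhd G v \<inter> Vk C G 1 = {a}"
    using card_height_one_nbhd[OF v] by (rule card_1_singletonE)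
  have w_in: "w \<in> nbhd G v \<inter> Vk C G 1" using w G_in(2) in_nbhd_iff by (auto simp: Vk_def)
  have "h q \<noteq> 1"
  proof
    assume "h q = 1"
    then have "q \<in> nbhd G v \<inter> Vk C G 1" using q(1) \<open>q \<in> C\<close> in_nbhd_iff by (auto simp: Vk_def)
    then have "q = w" using w_in unfolding N by simp
    then show False using q(2) by simp
  qed
  moreover have "\<chi> v = c" using color_iff_even_vheight[OF v(1)] v(2) by simp
  then have "odd (h q)" using color_iff_even_vheight[OF \<open>q \<in> C\<close>] G_proper[OF q(1)] by simp
  ultimately show ?thesis using vheight_le_3[OF \<open>q \<in> C\<close>] by (auto simp: le_Suc_eq numeral_3_eq_3)
qed

lemma vheight_neighbor_eq_2:
  assumes s: "s \<in> C" "h s = 3" and "G s y"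
  shows "h y = 2"
proof -
  have "y \<in> C" using G_in(2)[OF \<open>G s y\<close>] .
  have "\<chi> s \<noteq> c" using color_iff_even_vheight[OF s(1)] s(2) by simp
  then have "\<chi> y = c" using color_neq_neq[of "\<chi> y" "\<chi> s" c] G_proper[OF \<open>G s y\<close>] by auto
  then have "even (h y)" using color_iff_even_vheight[OF \<open>y \<in> C\<close>] by simp
  moreover have "2 \<le> h y" using vheight_edge_le[OF \<open>G s y\<close>] s(2) by simp
  then have "h y = 2 \<or> h y = 3" using vheight_le_3[OF \<open>y \<in> C\<close>] by arith
  ultimately show ?thesis by auto
qed

lemma card_height_two_nbhd:
  assumes w: "w \<in> C" "h w = 1"
  shows "card (nbhd G w \<inter> Vk C G 2) \<le> 1"
proof (rule ccontr)
  assume "\<not> card (nbhd G w \<inter> Vk C G 2) \<le> 1"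
  then obtain v1 v2 where "v1 \<in> nbhd G w \<inter> Vk C G 2" "v2 \<in> nbhd G w \<inter> Vk C G 2" "v1 \<noteq> v2"
    using card_le_Suc0_iff_eq[of "nbhd G w \<inter> Vk C G 2"] finite_nbhd by auto
  then have v1: "G v1 w" "v1 \<in> C" "h v1 = 2" and v2: "G v2 w" "v2 \<in> C" "h v2 = 2"
    and "v1 \<noteq> v2"
    using in_nbhd_iff G_sym by (auto simp: Vk_def)
  have "h v1 \<noteq> 0" "h v2 \<noteq> 0" using v1(3) v2(3) by simp_all
  then obtain s1 s2 where s1: "G v1 s1" "s1 \<noteq> w" and s2: "G v2 s2" "s2 \<noteq> w"
    using other_neighbor_if_vheight_pos[OF v1(2) _ v1(1)]
      other_neighbor_if_vheight_pos[OF v2(2) _ v2(1)]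
    by metis
  have "h s1 = 3" using vheight_neighbor_eq_3[OF v1(2,3,1) w(2) s1] .
  then have "h s1 \<noteq> 0" by simp
  then obtain y where y: "G s1 y" "y \<noteq> v1"
    by (rule other_neighbor_if_vheight_pos[OF G_in(2)[OF s1(1)] _ G_sym[OF s1(1)]])
  have "h y = Suc 1" using vheight_neighbor_eq_2[OF G_in(2)[OF s1(1)] \<open>h s1 = 3\<close> y(1)] by simp
  then obtain r where r: "G y r" "h r = 1" by (rule vheight_Suc_neighbor[OF G_in(2)[OF y(1)]])
  obtain e where e: "G r e" "leaf C G e"
    by (rule leaf_neighbor_if_vheight_1[OF G_in(2)[OF r(1)] r(2)])
  have "\<chi> v1 = c" using color_iff_even_vheight[OF v1(2)] v1(3) by simp
  have "r \<noteq> s1" using r(2) \<open>h s1 = 3\<close> by auto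
  have branch: "\<exists>\<beta> \<pi>. E \<beta> q \<and> \<beta> \<noteq> v1 \<and> \<pi> \<in> inner \<and> E \<pi> \<beta> \<and> \<pi> \<noteq> q"
    if "G v1 q" "q \<noteq> s1" for q
  proof (cases "q = w")
    case True
    have "E v2 w" "s2 \<in> inner" "E s2 v2"
      using v2(1) G_sym[OF s2(1)] G_in(2)[OF s2(1)] C_subset_inner by (auto simp: G_iff)
    then show ?thesis using True \<open>v1 \<noteq> v2\<close> s2(2) by blast
  next
    case False
    have "q \<in> C" using G_in(2)[OF that(1)] .
    moreover have "h q = 3" using vheight_neighbor_eq_3[OF v1(2,3,1) w(2) that(1) False] .
    moreover have "\<chi> q \<noteq> c" using color_iff_even_vheight[OF \<open>q \<in> C\<close>] \<open>h q = 3\<close> by simp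
    ultimately show ?thesis using branch_continues by simp
  qed
  have "\<not> color_unmixed V E \<chi> c"
    using not_color_unmixed_if_path_to_leaf[OF v1(2) \<open>\<chi> v1 = c\<close> s1(1) y(1) y(2) r(1)
        \<open>r \<noteq> s1\<close> e(2,1) branch] .
  then show False using unmixed by blast
qed

lemma height_conditions_if_color_unmixed: "height_conditions E C"
  using vheight_le_3 card_height_one_nbhd card_height_two_nbhd by (rule height_conditionsI)

end

end

lemma (in colored_tree) color_unmixed_iff_height_conditions:
  "color_unmixed V E \<chi> c \<longleftrightarrow> (\<forall>C\<in>components inner (induced E inner). height_conditions E C)"
proof
  assume unmixed: "color_unmixed V E \<chi> c"
  show "\<forall>C\<in>components inner (induced E inner). height_conditions E C"
  proof
    fix C assume "C \<in> components inner (induced E inner)"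
    then interpret interior_component V E \<chi> c C
      by (intro interior_component.intro colored_tree.intro bipartite_graph_axioms
          colored_tree_axioms interior_component_axioms.intro)
    show "height_conditions E C" using height_conditions_if_color_unmixed[OF unmixed] .
  qed
qed (rule color_unmixed_if_height_conditions)

lemma TD_set_eq_if_card_le_2:
  assumes simple: "simple_graph V E" and "finite V" "card V \<le> 2" and TD: "is_TD_set V E D"
  shows "D = V"
proof
  show "D \<subseteq> V" using TD by (simp add: is_TD_set_def)
  show "V \<subseteq> D"
  proof
    fix x assume "x \<in> V"
    then obtain d where d: "d \<in> D" "E x d"
      using TD by (auto simp: is_TD_set_def nbhd_set_def nbhd_def)
    have "d \<in> V" using simple_graph_edgeD(2)[OF simple d(2)] .
    then obtain d' where d': "d' \<in> D" "E d d'"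
      using TD by (auto simp: is_TD_set_def nbhd_set_def nbhd_def)
    have "d' \<in> V" "d' \<noteq> d" "x \<noteq> d" using simple_graph_edgeD[OF simple] d(2) d'(2) by blast+
    moreover have "card {x, d, d'} \<le> card V"
      using \<open>x \<in> V\<close> \<open>d \<in> V\<close> \<open>d' \<in> V\<close> \<open>finite V\<close> by (intro card_mono) auto
    ultimately have "d' = x" using \<open>card V \<le> 2\<close> by (auto simp: card_insert_if split: if_splits)
    then show "x \<in> D" using d'(1) by simp
  qed
qed

lemma unmixed_if_card_le_2:
  "simple_graph V E \<Longrightarrow> finite V \<Longrightarrow> card V \<le> 2 \<Longrightarrow> unmixed V E"
  using TD_set_eq_if_card_le_2 by (metis minimal_TD_set_def unmixed_def)

lemma (in induced_subforest) vheight_eq_0_if_card_le_2: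
  assumes "card V \<le> 2" "x \<in> C"
  shows "h x = 0"
proof (cases "nbhd G x = {}")
  case False
  then obtain y where y: "G x y" using in_nbhd_iff by blast
  have "z = y" if "G x z" for z
  proof (rule ccontr)
    assume "z \<noteq> y"
    moreover have "x \<noteq> y" "x \<noteq> z" using G_irrefl y that by blast+
    moreover have "{x, y, z} \<subseteq> V" using G_in y that assms(2) subset by blast
    then have "card {x, y, z} \<le> card V" using tree by (intro card_mono) (simp_all add: tree_def)
    ultimately show False using assms(1) by (auto simp: card_insert_if split: if_splits)
  qed
  then have "nbhd G x = {y}" using y in_nbhd_iff by blast
  then show ?thesis using vheight_leaf assms(2) by (simp add: leaf_def)
qed (rule vheight_isolated)

lemma (in induced_subforest) height_conditions_if_card_le_2:
  "card V \<le> 2 \<Longrightarrow> C \<noteq> {} \<Longrightarrow> height_conditions E C"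
  using vheight_eq_0_if_card_le_2 gheight_le_iff by (auto simp: height_conditions_def Vk_def)

lemma unmixed_iff_height_conditions:
  assumes tree: "tree V E" and proper: "proper_2_coloring V E \<chi>"
  shows "unmixed V E \<longleftrightarrow> (\<forall>c. \<forall>C \<in> components (interior_set V E \<chi> c)
    (induced E (interior_set V E \<chi> c)). height_conditions E C)"
proof (cases "3 \<le> card V")
  case True
  txt \<open>The color is a parameter of \<open>colored_tree\<close> but, occurring in no assumption, not an
    argument of the locale predicate.\<close>
  have ct: "colored_tree V E \<chi>" using assms True by unfold_locales (simp_all add: tree_def)
  have "\<exists>y. E x y" if "x \<in> V" for x using colored_tree.has_neighbor[OF ct that] by blast
  then have "unmixed V E \<longleftrightarrow> (\<forall>c. color_unmixed V E \<chi> c)"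
    using bipartite_graph.unmixed_iff_color_unmixed[OF colored_tree.axioms(1)[OF ct]] tree
    by (simp add: tree_def)
  also have "\<dots> \<longleftrightarrow> (\<forall>c. \<forall>C \<in> components (interior_set V E \<chi> c)
    (induced E (interior_set V E \<chi> c)). height_conditions E C)"
    using colored_tree.color_unmixed_iff_height_conditions[OF ct] by blast
  finally show ?thesis .
next
  case False
  have "height_conditions E C"
    if "C \<in> components (interior_set V E \<chi> c) (induced E (interior_set V E \<chi> c))" for c C
  proof -
    have "interior_set V E \<chi> c \<subseteq> V" by (auto simp: interior_set_def)
    then have "C \<subseteq> V" "C \<noteq> {}" using components_subset_nonempty[OF that] by blast+
    then show ?thesis
      using induced_subforest.height_conditions_if_card_le_2[of V E C] tree False
      by (simp add: induced_subforest_def)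
  qed
  moreover have "unmixed V E"
    using unmixed_if_card_le_2[of V E] tree False by (simp add: tree_def)
  ultimately show ?thesis by blast
qed

lemma ball_colors: "(\<forall>c\<in>{Blue, Red}. P c) \<longleftrightarrow> (\<forall>c. P c)"
  by (metis color.exhaust insertCI)

theorem theorem3p47:
  fixes V :: "'a set" and E :: "'a \<Rightarrow> 'a \<Rightarrow> bool" and \<chi> :: "'a \<Rightarrow> color"
  assumes "tree V E" and "proper_2_coloring V E \<chi>"
  shows "unmixed V E \<longleftrightarrow>
    (\<forall>c \<in> {Blue, Red}. \<forall>C \<in> components (interior_set V E \<chi> c) (induced E (interior_set V E \<chi> c)).
        gheight C (induced E C) \<le> 3
      \<and> (\<forall>v \<in> Vk C (induced E C) 2. card (nbhd (induced E C) v \<inter> Vk C (induced E C) 1) = 1)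
      \<and> (\<forall>v \<in> Vk C (induced E C) 1. card (nbhd (induced E C) v \<inter> Vk C (induced E C) 2) \<le> 1))"
  using unmixed_iff_height_conditions[OF assms] by (simp only: ball_colors height_conditions_def)

end
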